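(* For a $(2n+1)$-dimensional almost paracontact metric manifold $(M,\varphi,\xi,\eta,g)$, the vector field $\xi$ is Killing if and only if at every point the structure tensor lies in $\mathbb G_1\oplus\mathbb G_2\oplus\mathbb G_3\oplus\mathbb G_4\oplus\mathbb G_5\oplus\mathbb G_8\oplus\mathbb G_9\oplus\mathbb G_{11}$, i.e. $F^6=F^7=F^{10}=F^{12}=0$.
   Context: STRUCTURE. An almost paracontact metric manifold $(M,\varphi,\xi,\eta,g)$ of dimension $2n+1$ ($n\ge1$) is a smooth manifold with a $(1,1)$-tensor field $\varphi$, a vector field $\xi$, a 1-form $\eta$ and a pseudo-Riemannian metric $g$ such that $\varphi^2=\mathrm{id}-\eta\otimes\xi$, $\eta(\xi)=1$, $\varphi\xi=0$ and $g(\varphi x,\varphi y)=-g(x,y)+\eta(x)\eta(y)$; then $\eta(x)=g(x,\xi)$, $\eta\circ\varphi=0$ and $\mathbb D=\ker\eta$ is a non-degenerate distribution of rank $2n$. The fundamental 2-form is $\phi(x,y)=g(\varphi x,y)$, $\nabla$ is the Levi-Civita connection of $g$, and the structure tensor is $F(x,y,z)=(\nabla_x\phi)(y,z)=g((\nabla_x\varphi)y,z)$. For a $(0,3)$-tensor $F$ at a point, $\theta_F(x)=\sum_{i,j=1}^{2n}g^{ij}F(e_i,e_j,x)$, $\theta^*_F(x)=\sum_{i,j=1}^{2n}g^{ij}F(e_i,\varphi e_j,x)$, where $e_1,\dots,e_{2n}$ is a basis of $\mathbb D_p$ and $(g^{ij})$ the inverse of $(g(e_i,e_j))$. CLASSES.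 At a point $p$, with $V=T_pM$ and $h=\varphi^2$, let $\mathcal F$ be the space of $(0,3)$-tensors $F$ on $V$ with $F(x,y,z)=-F(x,z,y)=F(x,\varphi y,\varphi z)-\eta(y)F(x,z,\xi)+\eta(z)F(x,y,\xi)$; the structure tensor lies in $\mathcal F$. Subspaces of $\mathcal F$ (conditions for all $x,y,z$): $\mathbb G_1$: $F(x,y,z)=\frac{1}{2(n-1)}\{g(x,\varphi y)\theta_F(\varphi z)-g(x,\varphi z)\theta_F(\varphi y)-g(\varphi x,\varphi y)\theta_F(hz)+g(\varphi x,\varphi z)\theta_F(hy)\}$ (for $n=1$, $\mathbb G_1=\{0\}$); $\mathbb G_2$: $F(\varphi x,\varphi y,z)=-F(x,y,z)$ and $\theta_F=0$; with $\mathcal F_3=\{F\in\mathcal F:F(\varphi x,\varphi y,z)=F(x,y,z)\}$: $\mathbb G_3=\{F\in\mathcal F_3:F(x,y,z)=-F(y,x,z)\}$, $\mathbb G_4=\{F\in\mathcal F_3:F(x,y,z)+F(y,z,x)+F(z,x,y)=0\}$; $\mathbb G_5$: $F(x,y,z)=\frac{\theta_F(\xi)}{2n}\{\eta(y)g(\varphi x,\varphi z)-\eta(z)g(\varphi x,\varphi y)\}$; $\mathbb G_6$: $F(x,y,z)=-\frac{\theta^*_F(\xi)}{2n}\{\eta(y)g(x,\varphi z)-\eta(z)g(x,\varphi y)\}$; $\mathbb G_7$: $F(x,y,z)=-\eta(y)F(x,z,\xi)+\eta(z)F(x,y,\xi)$, $F(x,y,\xi)=-F(y,x,\xi)=-F(\varphi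 x,\varphi y,\xi)$, $\theta^*_F(\xi)=0$; $\mathbb G_8$: $F(x,y,z)=-\eta(y)F(x,z,\xi)+\eta(z)F(x,y,\xi)$, $F(x,y,\xi)=F(y,x,\xi)=-F(\varphi x,\varphi y,\xi)$, $\theta_F(\xi)=0$; $\mathbb G_9$: $F(x,y,z)=-\eta(y)F(x,z,\xi)+\eta(z)F(x,y,\xi)$, $F(x,y,\xi)=-F(y,x,\xi)=F(\varphi x,\varphi y,\xi)$; $\mathbb G_{10}$: $F(x,y,z)=-\eta(y)F(x,z,\xi)+\eta(z)F(x,y,\xi)$, $F(x,y,\xi)=F(y,x,\xi)=F(\varphi x,\varphi y,\xi)$; $\mathbb G_{11}$: $F(x,y,z)=\eta(x)F(\xi,\varphi y,\varphi z)$; $\mathbb G_{12}$: $F(x,y,z)=\eta(x)\{\eta(y)F(\xi,\xi,z)-\eta(z)F(\xi,\xi,y)\}$. One has $\mathcal F=\mathbb G_1\oplus\cdots\oplus\mathbb G_{12}$; for $F\in\mathcal F$ write $F=\sum_{i=1}^{12}F^i$ with $F^i\in\mathbb G_i$. $M$ belongs to the class $\mathbb G_{i_1}\oplus\cdots\oplus\mathbb G_{i_k}$ if at every point its structure tensor lies in that subspace. $\xi$ is Killing if $\mathcal L_\xi g=0$. *)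

theory Defs
  imports "HOL-Analysis.Analysis"
begin

text \<open>Local (chart) model: the manifold is an open set U of the coordinate space real^('m::finite),
 tangent vectors at every point are elements of real^('m::finite); tensor fields are given
 pointwise as multilinear maps on real^('m::finite).\<close>

type_synonym 'm tens3 = "real^'m \<Rightarrow> real^'m \<Rightarrow> real^'m \<Rightarrow> real"

fun Ck_on :: "nat \<Rightarrow> (real^('m::finite)) set \<Rightarrow> (real^('m::finite) \<Rightarrow> real) \<Rightarrow> bool" where
  "Ck_on 0 U f = continuous_on U f"
| "Ck_on (Suc k) U f = (f differentiable_on U \<and>
      (\<forall>i. Ck_on k U (\<lambda>p. frechet_derivative f (at p) (axis i 1))))"

definition smooth_on :: "(real^('m::finite)) set \<Rightarrow> (real^('m::finite) \<Rightarrow> real) \<Rightarrow> bool" where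
  "smooth_on U f \<longleftrightarrow> (\<forall>k. Ck_on k U f)"

definition dd :: "(real^('m::finite) \<Rightarrow> 'b::real_normed_vector) \<Rightarrow> real^('m::finite) \<Rightarrow> real^('m::finite) \<Rightarrow> 'b" where
  "dd f p v = frechet_derivative f (at p) v"

definition bilinear_form :: "(real^('m::finite) \<Rightarrow> real^('m::finite) \<Rightarrow> real) \<Rightarrow> bool" where
  "bilinear_form b \<longleftrightarrow> (\<forall>y. linear (\<lambda>x. b x y)) \<and> (\<forall>x. linear (\<lambda>y. b x y))"

definition trilinear :: "('m::finite) tens3 \<Rightarrow> bool" where
  "trilinear F \<longleftrightarrow> (\<forall>y z. linear (\<lambda>x. F x y z)) \<and> (\<forall>x z. linear (\<lambda>y. F x y z))
     \<and> (\<forall>x y. linear (\<lambda>z. F x y z))"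

definition apcm_point ::
  "(real^('m::finite) \<Rightarrow> real^('m::finite) \<Rightarrow> real) \<Rightarrow> (real^('m::finite) \<Rightarrow> real^('m::finite)) \<Rightarrow> real^('m::finite) \<Rightarrow> (real^('m::finite) \<Rightarrow> real) \<Rightarrow> bool" where
  "apcm_point g phi xi eta \<longleftrightarrow>
     bilinear_form g \<and> (\<forall>x y. g x y = g y x) \<and> (\<forall>x. (\<forall>y. g x y = 0) \<longrightarrow> x = 0) \<and>
     linear phi \<and> linear eta \<and>
     (\<forall>x. phi (phi x) = x - eta x *\<^sub>R xi) \<and> eta xi = 1 \<and> phi xi = 0 \<and>
     (\<forall>x y. g (phi x) (phi y) = - g x y + eta x * eta y)"

definition Dbasis :: "nat \<Rightarrow> (real^('m::finite) \<Rightarrow> real) \<Rightarrow> (nat \<Rightarrow> real^('m::finite)) \<Rightarrow> bool" where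
  "Dbasis n eta e \<longleftrightarrow> (\<forall>i<2*n. eta (e i) = 0) \<and> inj_on e {..<2*n} \<and> independent (e ` {..<2*n})"

definition ginv :: "nat \<Rightarrow> (real^('m::finite) \<Rightarrow> real^('m::finite) \<Rightarrow> real) \<Rightarrow> (nat \<Rightarrow> real^('m::finite)) \<Rightarrow> nat \<Rightarrow> nat \<Rightarrow> real" where
  "ginv n g e = (SOME gi. \<forall>i<2*n. \<forall>j<2*n.
       (\<Sum>k<2*n. gi i k * g (e k) (e j)) = (if i = j then 1 else 0))"

definition theta ::
  "nat \<Rightarrow> (real^('m::finite) \<Rightarrow> real^('m::finite) \<Rightarrow> real) \<Rightarrow> (real^('m::finite) \<Rightarrow> real) \<Rightarrow> ('m::finite) tens3 \<Rightarrow> real^('m::finite) \<Rightarrow> real" where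
  "theta n g eta F x = (let e = (SOME e. Dbasis n eta e) in
      \<Sum>i<2*n. \<Sum>j<2*n. ginv n g e i j * F (e i) (e j) x)"

definition theta_star ::
  "nat \<Rightarrow> (real^('m::finite) \<Rightarrow> real^('m::finite) \<Rightarrow> real) \<Rightarrow> (real^('m::finite) \<Rightarrow> real^('m::finite)) \<Rightarrow> (real^('m::finite) \<Rightarrow> real)
     \<Rightarrow> ('m::finite) tens3 \<Rightarrow> real^('m::finite) \<Rightarrow> real" where
  "theta_star n g phi eta F x = (let e = (SOME e. Dbasis n eta e) in
      \<Sum>i<2*n. \<Sum>j<2*n. ginv n g e i j * F (e i) (phi (e j)) x)"

definition Fspace ::
  "(real^('m::finite) \<Rightarrow> real^('m::finite)) \<Rightarrow> real^('m::finite) \<Rightarrow> (real^('m::finite) \<Rightarrow> real) \<Rightarrow> ('m::finite) tens3 \<Rightarrow> bool" where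
  "Fspace phi xi eta F \<longleftrightarrow> trilinear F \<and>
     (\<forall>x y z. F x y z = - F x z y \<and>
        F x y z = F x (phi y) (phi z) - eta y * F x z xi + eta z * F x y xi)"

definition Gclass ::
  "nat \<Rightarrow> (real^('m::finite) \<Rightarrow> real^('m::finite) \<Rightarrow> real) \<Rightarrow> (real^('m::finite) \<Rightarrow> real^('m::finite)) \<Rightarrow> real^('m::finite) \<Rightarrow> (real^('m::finite) \<Rightarrow> real)
     \<Rightarrow> nat \<Rightarrow> ('m::finite) tens3 \<Rightarrow> bool" where
  "Gclass n g phi xi eta i F \<longleftrightarrow> Fspace phi xi eta F \<and>
    (let th = theta n g eta F; ths = theta_star n g phi eta F; h = (\<lambda>z. phi (phi z)) in
    (if i = 1 then
       (if n = 1 then (\<forall>x y z. F x y z = 0) else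
        (\<forall>x y z. F x y z = 1 / (2 * (real n - 1)) *
          (g x (phi y) * th (phi z) - g x (phi z) * th (phi y)
           - g (phi x) (phi y) * th (h z) + g (phi x) (phi z) * th (h y))))
     else if i = 2 then
       (\<forall>x y z. F (phi x) (phi y) z = - F x y z) \<and> (\<forall>x. th x = 0)
     else if i = 3 then
       (\<forall>x y z. F (phi x) (phi y) z = F x y z) \<and> (\<forall>x y z. F x y z = - F y x z)
     else if i = 4 then
       (\<forall>x y z. F (phi x) (phi y) z = F x y z) \<and> (\<forall>x y z. F x y z + F y z x + F z x y = 0)
     else if i = 5 then
       (\<forall>x y z. F x y z = th xi / (2 * real n) *
          (eta y * g (phi x) (phi z) - eta z * g (phi x) (phi y)))
     else if i = 6 then
       (\<forall>x y z. F x y z = - (ths xi / (2 * real n)) *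
          (eta y * g x (phi z) - eta z * g x (phi y)))
     else if i = 7 then
       (\<forall>x y z. F x y z = - eta y * F x z xi + eta z * F x y xi) \<and>
       (\<forall>x y. F x y xi = - F y x xi \<and> F x y xi = - F (phi x) (phi y) xi) \<and> ths xi = 0
     else if i = 8 then
       (\<forall>x y z. F x y z = - eta y * F x z xi + eta z * F x y xi) \<and>
       (\<forall>x y. F x y xi = F y x xi \<and> F x y xi = - F (phi x) (phi y) xi) \<and> th xi = 0
     else if i = 9 then
       (\<forall>x y z. F x y z = - eta y * F x z xi + eta z * F x y xi) \<and>
       (\<forall>x y. F x y xi = - F y x xi \<and> F x y xi = F (phi x) (phi y) xi)
     else if i = 10 then
       (\<forall>x y z. F x y z = - eta y * F x z xi + eta z * F x y xi) \<and>
       (\<forall>x y. F x y xi = F y x xi \<and> F x y xi = F (phi x) (phi y) xi)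
     else if i = 11 then
       (\<forall>x y z. F x y z = eta x * F xi (phi y) (phi z))
     else if i = 12 then
       (\<forall>x y z. F x y z = eta x * (eta y * F xi xi z - eta z * F xi xi y))
     else False))"

definition in_class ::
  "nat \<Rightarrow> (real^('m::finite) \<Rightarrow> real^('m::finite) \<Rightarrow> real) \<Rightarrow> (real^('m::finite) \<Rightarrow> real^('m::finite)) \<Rightarrow> real^('m::finite) \<Rightarrow> (real^('m::finite) \<Rightarrow> real)
     \<Rightarrow> nat set \<Rightarrow> ('m::finite) tens3 \<Rightarrow> bool" where
  "in_class n g phi xi eta I F \<longleftrightarrow>
     (\<exists>C. (\<forall>i\<in>I. Gclass n g phi xi eta i (C i)) \<and> (\<forall>x y z. F x y z = (\<Sum>i\<in>I. C i x y z)))"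

text \<open>Christoffel term: Gamma p x y = nabla_x Y at p for the constant vector field Y = y,
 characterised by the Koszul formula for constant (hence commuting) vector fields.\<close>
definition christoffel ::
  "(real^('m::finite) \<Rightarrow> real^('m::finite) \<Rightarrow> real^('m::finite) \<Rightarrow> real) \<Rightarrow> real^('m::finite) \<Rightarrow> real^('m::finite) \<Rightarrow> real^('m::finite) \<Rightarrow> real^('m::finite)" where
  "christoffel g p x y = (THE w. \<forall>z. 2 * g p w z =
       dd (\<lambda>q. g q y z) p x + dd (\<lambda>q. g q x z) p y - dd (\<lambda>q. g q x y) p z)"

definition lc_nabla ::
  "(real^('m::finite) \<Rightarrow> real^('m::finite) \<Rightarrow> real^('m::finite) \<Rightarrow> real) \<Rightarrow> (real^('m::finite) \<Rightarrow> real^('m::finite)) \<Rightarrow> real^('m::finite) \<Rightarrow> real^('m::finite) \<Rightarrow> real^('m::finite)" where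
  "lc_nabla g Y p x = dd Y p x + christoffel g p x (Y p)"

definition nabla_phi ::
  "(real^('m::finite) \<Rightarrow> real^('m::finite) \<Rightarrow> real^('m::finite) \<Rightarrow> real) \<Rightarrow> (real^('m::finite) \<Rightarrow> real^('m::finite) \<Rightarrow> real^('m::finite))
     \<Rightarrow> real^('m::finite) \<Rightarrow> real^('m::finite) \<Rightarrow> real^('m::finite) \<Rightarrow> real^('m::finite)" where
  "nabla_phi g phi p x y = lc_nabla g (\<lambda>q. phi q y) p x - phi p (lc_nabla g (\<lambda>q. y) p x)"

definition struct_tensor ::
  "(real^('m::finite) \<Rightarrow> real^('m::finite) \<Rightarrow> real^('m::finite) \<Rightarrow> real) \<Rightarrow> (real^('m::finite) \<Rightarrow> real^('m::finite) \<Rightarrow> real^('m::finite)) \<Rightarrow> real^('m::finite) \<Rightarrow> ('m::finite) tens3" where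
  "struct_tensor g phi p x y z = g p (nabla_phi g phi p x y) z"

text \<open>(L_xi g)(X,Y) = xi(g(X,Y)) - g([xi,X],Y) - g(X,[xi,Y]) for constant X = x, Y = y
 (so [xi,X] = - D xi(x)).\<close>
definition lie_g ::
  "(real^('m::finite) \<Rightarrow> real^('m::finite) \<Rightarrow> real^('m::finite) \<Rightarrow> real) \<Rightarrow> (real^('m::finite) \<Rightarrow> real^('m::finite)) \<Rightarrow> real^('m::finite) \<Rightarrow> real^('m::finite) \<Rightarrow> real^('m::finite) \<Rightarrow> real" where
  "lie_g g xi p x y = dd (\<lambda>q. g q x y) p (xi p) + g p (dd xi p x) y + g p x (dd xi p y)"

definition killing_on ::
  "(real^('m::finite)) set \<Rightarrow> (real^('m::finite) \<Rightarrow> real^('m::finite) \<Rightarrow> real^('m::finite) \<Rightarrow> real) \<Rightarrow> (real^('m::finite) \<Rightarrow> real^('m::finite)) \<Rightarrow> bool" where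
  "killing_on U g xi \<longleftrightarrow> (\<forall>p\<in>U. \<forall>x y. lie_g g xi p x y = 0)"

end

theory Submission
  imports Defs
begin

text \<open>
In coordinates, the Koszul formula for the Levi-Civita connection turns the Lie derivative into
(L_xi g)(x,y) = -(F(x,phi y,xi) + F(y,phi x,xi)), so xi is Killing iff the structure tensor satisfies
the pointwise condition F(x,phi y,xi) + F(y,phi x,xi) = 0. Each of the classes
G_1, ..., G_5, G_8, G_9, G_11 satisfies it. Conversely, every F in \<F> splits as
F(x,y,z) = V(x,y,z) + eta(z) B(x,y) - eta(y) B(x,z) + eta(x) F(xi,phi y,phi z) with
V(x,y,z) = F(x,phi y,phi z) - eta(x) F(xi,phi y,phi z) and B = F(-,-,xi).
The horizontal part V is the sum of a phi-anti-invariant half, which lies in G_1 + G_2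
(separated by the trace theta), and a phi-invariant half, which lies in G_3 + G_4 (separated by the
cyclic sum). The condition says B(phi x,phi y) = -B(y,x), so the symmetric part of B is
phi-anti-invariant and yields an element of G_5 + G_8 (separated by theta(xi)), while the skew part
is phi-invariant and yields an element of G_9.
\<close>

lemma linear_rules:
  assumes "linear l"
  shows "l (a + b) = l a + l b" "l (c *\<^sub>R a) = c *\<^sub>R l a" "l (a - b) = l a - l b"
    "l 0 = 0" "l (- a) = - l a"
  using assms by (simp_all add: linear_add linear_scale linear_diff linear_0 linear_neg)

lemma linear_axis_expansion:
  fixes L :: "real^'n::finite \<Rightarrow> 'b::real_vector"
  assumes "linear L"
  shows "L a = (\<Sum>i\<in>UNIV. (a $ i) *\<^sub>R L (axis i 1))"
proof -
  have a: "a = (\<Sum>i\<in>UNIV. (a $ i) *\<^sub>R axis i 1)"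
    using basis_expansion[of a] by (simp add: scalar_mult_eq_scaleR)
  show ?thesis by (subst a) (simp add: linear_sum[OF assms] linear_scale[OF assms])
qed

lemma bilinear_axis_expansion:
  fixes B :: "real^'n::finite \<Rightarrow> real^'n \<Rightarrow> real"
  assumes "\<And>y. linear (\<lambda>x. B x y)" "\<And>x. linear (B x)"
  shows "B a b = (\<Sum>i\<in>UNIV. \<Sum>j\<in>UNIV. (a $ i) * (b $ j) * B (axis i 1) (axis j 1))"
  using linear_axis_expansion[OF assms(1), of a b] linear_axis_expansion[OF assms(2), of _ b]
  by (simp add: sum_distrib_left mult.assoc)

lemma bilinear_formI:
  assumes "\<And>x1 x2 y. b (x1 + x2) y = b x1 y + b x2 y" "\<And>c x y. b (c *\<^sub>R x) y = c * b x y"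
    "\<And>x y1 y2. b x (y1 + y2) = b x y1 + b x y2" "\<And>c x y. b x (c *\<^sub>R y) = c * b x y"
  shows "bilinear_form b"
  unfolding bilinear_form_def by (auto intro!: linearI simp: assms)

lemma bilinear_form_simps:
  assumes "bilinear_form b"
  shows "b (x + y) z = b x z + b y z" "b x (y + z) = b x y + b x z"
    "b (c *\<^sub>R x) y = c * b x y" "b x (c *\<^sub>R y) = c * b x y"
    "b (x - y) z = b x z - b y z" "b x (y - z) = b x y - b x z"
    "b 0 y = 0" "b x 0 = 0"
  using assms linear_rules[of "\<lambda>x. b x _"] linear_rules[of "b _"]
  unfolding bilinear_form_def by simp_all

lemma trilinearI:
  assumes "\<And>x1 x2 y z. F (x1 + x2) y z = F x1 y z + F x2 y z"
    "\<And>c x y z. F (c *\<^sub>R x) y z = c * F x y z"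
    "\<And>x y1 y2 z. F x (y1 + y2) z = F x y1 z + F x y2 z"
    "\<And>c x y z. F x (c *\<^sub>R y) z = c * F x y z"
    "\<And>x y z1 z2. F x y (z1 + z2) = F x y z1 + F x y z2"
    "\<And>c x y z. F x y (c *\<^sub>R z) = c * F x y z"
  shows "trilinear F"
  unfolding trilinear_def by (auto intro!: linearI simp: assms)

lemma trilinear_simps:
  assumes "trilinear F"
  shows "F (x + y) z w = F x z w + F y z w" "F x (y + z) w = F x y w + F x z w"
    "F x y (z + w) = F x y z + F x y w"
    "F (c *\<^sub>R x) y z = c * F x y z" "F x (c *\<^sub>R y) z = c * F x y z" "F x y (c *\<^sub>R z) = c * F x y z"
    "F (x - y) z w = F x z w - F y z w" "F x (y - z) w = F x y w - F x z w"
    "F x y (z - w) = F x y z - F x y w"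
    "F 0 y z = 0" "F x 0 z = 0" "F x y 0 = 0"
    "F (- x) y z = - F x y z" "F x (- y) z = - F x y z" "F x y (- z) = - F x y z"
  using assms linear_rules[of "\<lambda>x. F x _ _"] linear_rules[of "\<lambda>y. F _ y _"]
    linear_rules[of "\<lambda>z. F _ _ z"]
  unfolding trilinear_def by simp_all

lemma trilinear_bilinear_form_12:
  "trilinear F \<Longrightarrow> bilinear_form (\<lambda>x y. F x y z)"
  by (rule bilinear_formI) (simp_all add: trilinear_simps)

lemma trilinear_bilinear_form_23:
  "trilinear F \<Longrightarrow> bilinear_form (F x)"
  by (rule bilinear_formI) (simp_all add: trilinear_simps)

lemma in_class_singleton:
  "Gclass n g phi xi eta i F \<Longrightarrow> in_class n g phi xi eta {i} F"
  unfolding in_class_def by (intro exI[of _ "\<lambda>_. F"]) simp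

lemma in_class_add:
  assumes A: "in_class n g phi xi eta I A" and B: "in_class n g phi xi eta J B"
    and fin: "finite I" "finite J" and disj: "I \<inter> J = {}"
    and F: "\<And>x y z. F x y z = A x y z + B x y z"
  shows "in_class n g phi xi eta (I \<union> J) F"
proof -
  obtain CA where CA: "\<forall>i\<in>I. Gclass n g phi xi eta i (CA i)" "\<forall>x y z. A x y z = (\<Sum>i\<in>I. CA i x y z)"
    using A unfolding in_class_def by blast
  obtain CB where CB: "\<forall>i\<in>J. Gclass n g phi xi eta i (CB i)" "\<forall>x y z. B x y z = (\<Sum>i\<in>J. CB i x y z)"
    using B unfolding in_class_def by blast
  define C where "C i = (if i \<in> I then CA i else CB i)" for i
  have "(\<Sum>i\<in>J. C i x y z) = (\<Sum>i\<in>J. CB i x y z)" for x y z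
    using disj by (intro sum.cong) (auto simp: C_def)
  then have "F x y z = (\<Sum>i\<in>I \<union> J. C i x y z)" for x y z
    using CA(2) CB(2) fin disj by (simp add: F sum.union_disjoint C_def)
  moreover have "\<forall>i\<in>I \<union> J. Gclass n g phi xi eta i (C i)"
    using CA(1) CB(1) by (auto simp: C_def)
  ultimately show ?thesis unfolding in_class_def by blast
qed

section \<open>Almost paracontact metric vector spaces\<close>

locale apcm_space =
  fixes n :: nat and g :: "real^'m::finite \<Rightarrow> real^'m \<Rightarrow> real" and phi :: "real^'m \<Rightarrow> real^'m"
    and xi :: "real^'m" and eta :: "real^'m \<Rightarrow> real"
  assumes apcm: "apcm_point g phi xi eta" and card_dim: "CARD('m) = 2 * n + 1" and n_ge_1: "n \<ge> 1"
begin

lemma linear_g_left: "linear (\<lambda>x. g x y)" and linear_g_right: "linear (g x)"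
  and g_sym: "g x y = g y x" and g_nondegenerate: "(\<forall>y. g x y = 0) \<Longrightarrow> x = 0"
  and linear_phi: "linear phi" and linear_eta: "linear eta"
  and phi_phi [simp]: "phi (phi x) = x - eta x *\<^sub>R xi" and eta_xi [simp]: "eta xi = 1"
  and phi_xi [simp]: "phi xi = 0" and g_phi_phi [simp]: "g (phi x) (phi y) = - g x y + eta x * eta y"
  using apcm unfolding apcm_point_def bilinear_form_def by auto

lemma bilinear_g: "bilinear_form g"
  using apcm unfolding apcm_point_def by blast

lemmas g_simps [simp] = bilinear_form_simps[OF bilinear_g]

lemma g_neg [simp]: "g (- x) y = - g x y" "g x (- y) = - g x y"
  using linear_rules(5)[OF linear_g_left] linear_rules(5)[OF linear_g_right] by simp_all

lemmas phi_simps [simp] = linear_rules[OF linear_phi]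

lemmas eta_simps [simp] = linear_rules[OF linear_eta, simplified]

lemma g_sum_left: "g (sum f A) z = (\<Sum>a\<in>A. g (f a) z)"
  using linear_sum[OF linear_g_left] by blast

lemma g_sum_right: "g z (sum f A) = (\<Sum>a\<in>A. g z (f a))"
  using linear_sum[OF linear_g_right] by blast

lemma eta_sum: "eta (sum f A) = (\<Sum>a\<in>A. eta (f a))"
  using linear_sum[OF linear_eta] by blast

lemma g_xi [simp]: "g x xi = eta x"
  using g_phi_phi[of x xi] by simp

lemma g_xi_left [simp]: "g xi x = eta x"
  using g_sym g_xi by metis

lemma xi_nonzero: "xi \<noteq> 0"
  using eta_xi by (metis eta_simps(4) zero_neq_one)

lemma eta_phi [simp]: "eta (phi x) = 0"
proof -
  have "phi (phi (phi x)) = phi x - eta (phi x) *\<^sub>R xi" by (rule phi_phi)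
  then have "eta (phi x) *\<^sub>R xi = 0" by simp
  then show ?thesis using xi_nonzero by simp
qed

lemma g_phi_skew: "g (phi x) y = - g x (phi y)"
  using g_phi_phi[of x "phi y"] by simp

lemma riesz_representation:
  assumes "linear l"
  obtains w where "\<And>z. g w z = l z"
proof -
  define T where "T w = (\<chi> i. g w (axis i 1))" for w
  have lin: "linear T" by (rule linearI) (simp_all add: T_def vec_eq_iff)
  have "inj T"
  proof (rule linear_inj_iff_eq_0[OF lin, THEN iffD2], intro allI impI)
    fix w assume "T w = 0"
    then have "g w (axis i 1) = 0" for i by (simp add: T_def vec_eq_iff)
    then have "g w z = 0" for z
      using linear_axis_expansion[OF linear_g_right, of w z] by simp
    then show "w = 0" using g_nondegenerate by blast
  qed
  then obtain w where "T w = (\<chi> i. l (axis i 1))"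
    by (metis linear_injective_imp_surjective lin surjD)
  then have "g w (axis i 1) = l (axis i 1)" for i by (simp add: T_def vec_eq_iff)
  then have "g w z = l z" for z
    using linear_axis_expansion[OF linear_g_right, of w z] linear_axis_expansion[OF assms, of z] by simp
  then show ?thesis using that by blast
qed

lemma subspace_D: "subspace {v. eta v = 0}"
  using linear_eta by (simp add: linear_subspace_kernel)

lemma span_D_subset: "B \<subseteq> {v. eta v = 0} \<Longrightarrow> span B \<subseteq> {v. eta v = 0}"
  using span_minimal subspace_D by blast

lemma D_basis:
  obtains B where "B \<subseteq> {v. eta v = 0}" "independent B" "{v. eta v = 0} \<subseteq> span B" "card B = 2 * n"
proof -
  obtain B where B: "B \<subseteq> {v. eta v = 0}" "independent B" "{v. eta v = 0} \<subseteq> span B"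
    "card B = dim {v. eta v = 0}"
    using basis_exists by blast
  have "xi \<notin> span B" using span_D_subset[OF B(1)] by auto
  then have indep: "independent (insert xi B)" using independent_insertI B(2) by blast
  have "v \<in> span (insert xi B)" for v
  proof -
    have "v - eta v *\<^sub>R xi \<in> span B" using B(3) by auto
    then have "v - eta v *\<^sub>R xi \<in> span (insert xi B)"
      by (meson span_mono subset_insertI subsetD)
    moreover have "eta v *\<^sub>R xi \<in> span (insert xi B)" by (simp add: span_base span_scale)
    ultimately show ?thesis using span_add by fastforce
  qed
  then have "card (insert xi B) = 2 * n + 1"
    using basis_card_eq_dim[OF subset_UNIV _ indep] card_dim by auto
  moreover have "finite B" "xi \<notin> B" using B(1,2) finiteI_independent by auto
  ultimately show ?thesis using B that by simp
qed

lemma dim_D: "dim {v. eta v = 0} = 2 * n"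
proof -
  obtain B where "B \<subseteq> {v. eta v = 0}" "independent B" "{v. eta v = 0} \<subseteq> span B" "card B = 2 * n"
    by (rule D_basis)
  then show ?thesis using basis_card_eq_dim by metis
qed

lemma ex_Dbasis: "\<exists>e. Dbasis n eta e"
proof -
  obtain B where B: "B \<subseteq> {v. eta v = 0}" "independent B" "{v. eta v = 0} \<subseteq> span B" "card B = 2 * n"
    by (rule D_basis)
  obtain e where "bij_betw e {0..<card B} B"
    using ex_bij_betw_nat_finite finiteI_independent[OF B(2)] by blast
  then have "e ` {..<2 * n} = B" "inj_on e {..<2 * n}"
    using B(4) by (auto simp: bij_betw_def atLeast0LessThan)
  then show ?thesis unfolding Dbasis_def using B by auto
qed

lemma Dbasis_coeffs_eq_0:
  assumes e: "Dbasis n eta e" and "(\<Sum>k<2 * n. c k *\<^sub>R e k) = 0" "k < 2 * n"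
  shows "c k = 0"
proof -
  have inj: "inj_on e {..<2 * n}" and indep: "independent (e ` {..<2 * n})"
    using e unfolding Dbasis_def by auto
  define u where "u v = c (inv_into {..<2 * n} e v)" for v
  have "(\<Sum>v\<in>e ` {..<2 * n}. u v *\<^sub>R v) = (\<Sum>k<2 * n. c k *\<^sub>R e k)"
    by (simp add: sum.reindex[OF inj] u_def inv_into_f_f[OF inj])
  then have "\<forall>v\<in>e ` {..<2 * n}. u v = 0"
    using assms(2) indep dependent_finite[of "e ` {..<2 * n}"] by auto
  then show ?thesis using assms(3) by (auto simp: u_def inv_into_f_f[OF inj])
qed

lemma Dbasis_span:
  assumes e: "Dbasis n eta e" and "eta v = 0"
  obtains c where "v = (\<Sum>k<2 * n. c k *\<^sub>R e k)"
proof -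
  have inj: "inj_on e {..<2 * n}" and indep: "independent (e ` {..<2 * n})"
    and "\<forall>i<2 * n. eta (e i) = 0"
    using e unfolding Dbasis_def by auto
  then have "{v. eta v = 0} \<subseteq> span (e ` {..<2 * n})"
    by (intro card_ge_dim_independent) (auto simp: dim_D card_image)
  then obtain u where "v = (\<Sum>w\<in>e ` {..<2 * n}. u w *\<^sub>R w)"
    using assms(2) span_finite[of "e ` {..<2 * n}"] by auto
  then show ?thesis using that[of "\<lambda>k. u (e k)"] by (simp add: sum.reindex[OF inj])
qed

text \<open>The rows of the inverse Gram matrix are the coefficients of the g-dual frame, obtained by
  representing the coordinate functionals (extended by 0 on xi) through g.\<close>

lemma ginv_exists:
  assumes e: "Dbasis n eta e"
  shows "\<exists>gi. \<forall>i<2 * n. \<forall>j<2 * n. (\<Sum>k<2 * n. gi i k * g (e k) (e j)) = (if i = j then 1 else 0)"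
proof -
  have inj: "inj_on e {..<2 * n}" and indep: "independent (e ` {..<2 * n})"
    and eta_e: "\<And>i. i < 2 * n \<Longrightarrow> eta (e i) = 0"
    using e unfolding Dbasis_def by auto
  have "span (e ` {..<2 * n}) \<subseteq> {v. eta v = 0}" by (rule span_D_subset) (use eta_e in auto)
  then have "xi \<notin> span (e ` {..<2 * n})" by auto
  then have indep_xi: "independent (insert xi (e ` {..<2 * n}))"
    using independent_insertI indep by blast
  have "\<exists>c. \<forall>j<2 * n. (\<Sum>k<2 * n. c k * g (e k) (e j)) = (if i = j then 1 else 0)"
    if i: "i < 2 * n" for i
  proof -
    obtain l :: "real^'m \<Rightarrow> real"
      where l: "linear l" "\<forall>v\<in>insert xi (e ` {..<2 * n}). l v = (if v = e i then 1 else 0)"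
      using linear_independent_extend[OF indep_xi, of "\<lambda>v. if v = e i then 1 else 0"] by blast
    obtain w where w: "\<And>z. g w z = l z" using riesz_representation[OF l(1)] by blast
    have "e i \<noteq> xi" using eta_e[OF i] by (metis eta_xi zero_neq_one)
    then have "eta w = 0" using w[of xi] l(2) by simp
    then obtain c where c: "w = (\<Sum>k<2 * n. c k *\<^sub>R e k)" using Dbasis_span[OF e] by blast
    have "(\<Sum>k<2 * n. c k * g (e k) (e j)) = (if i = j then 1 else 0)" if j: "j < 2 * n" for j
    proof -
      have "(\<Sum>k<2 * n. c k * g (e k) (e j)) = l (e j)" by (simp add: c g_sum_left flip: w)
      moreover have "e j = e i \<longleftrightarrow> i = j" using inj i j by (auto dest: inj_onD)
      ultimately show ?thesis using l(2) j by simp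
    qed
    then show ?thesis by blast
  qed
  then have "\<forall>i. \<exists>c. i < 2 * n \<longrightarrow>
      (\<forall>j<2 * n. (\<Sum>k<2 * n. c k * g (e k) (e j)) = (if i = j then 1 else 0))"
    by blast
  then show ?thesis by (rule choice)
qed

definition frame :: "nat \<Rightarrow> real^'m" where
  "frame = (SOME e. Dbasis n eta e)"

definition frame_ginv :: "nat \<Rightarrow> nat \<Rightarrow> real" where
  "frame_ginv = ginv n g frame"

definition coframe :: "nat \<Rightarrow> real^'m" where
  "coframe i = (\<Sum>k<2 * n. frame_ginv i k *\<^sub>R frame k)"

definition trace_D :: "(real^'m \<Rightarrow> real^'m \<Rightarrow> real) \<Rightarrow> real" where
  "trace_D B = (\<Sum>i<2 * n. \<Sum>j<2 * n. frame_ginv i j * B (frame i) (frame j))"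

lemma Dbasis_frame: "Dbasis n eta frame"
  unfolding frame_def using ex_Dbasis by (rule someI_ex)

lemma eta_frame [simp]: "i < 2 * n \<Longrightarrow> eta (frame i) = 0"
  using Dbasis_frame unfolding Dbasis_def by blast

lemma frame_ginv_inverse:
  "i < 2 * n \<Longrightarrow> j < 2 * n \<Longrightarrow>
    (\<Sum>k<2 * n. frame_ginv i k * g (frame k) (frame j)) = (if i = j then 1 else 0)"
  using someI_ex[OF ginv_exists[OF Dbasis_frame]] unfolding frame_ginv_def ginv_def by blast

lemma theta_eq_trace_D: "theta n g eta F z = trace_D (\<lambda>x y. F x y z)"
  unfolding theta_def trace_D_def frame_ginv_def frame_def Let_def ..

lemma eta_coframe [simp]: "eta (coframe i) = 0"
  by (simp add: coframe_def eta_sum)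

lemma g_coframe_frame: "i < 2 * n \<Longrightarrow> j < 2 * n \<Longrightarrow> g (coframe i) (frame j) = (if i = j then 1 else 0)"
  using frame_ginv_inverse by (simp add: coframe_def g_sum_left)

lemma frame_expansion:
  assumes "eta v = 0"
  shows "v = (\<Sum>j<2 * n. g (coframe j) v *\<^sub>R frame j)"
proof -
  obtain c where c: "v = (\<Sum>k<2 * n. c k *\<^sub>R frame k)" using Dbasis_span[OF Dbasis_frame assms] .
  have "g (coframe j) v = c j" if "j < 2 * n" for j
    using that by (simp add: c g_sum_right g_coframe_frame if_distrib cong: if_cong)
  then show ?thesis using c by simp
qed

lemma frame_ginv_sym: "i < 2 * n \<Longrightarrow> k < 2 * n \<Longrightarrow> frame_ginv i k = frame_ginv k i"
proof -
  have "frame_ginv i k = g (coframe k) (coframe i)" if "k < 2 * n" for i k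
  proof -
    have "(\<Sum>j<2 * n. (frame_ginv i j - g (coframe j) (coframe i)) *\<^sub>R frame j) = 0"
      using frame_expansion[OF eta_coframe, of i]
      by (simp add: coframe_def[of i] scaleR_diff_left sum_subtractf)
    then show ?thesis
      using Dbasis_coeffs_eq_0[OF Dbasis_frame, of "\<lambda>j. frame_ginv i j - g (coframe j) (coframe i)"] that
      by simp
  qed
  then show "i < 2 * n \<Longrightarrow> k < 2 * n \<Longrightarrow> ?thesis" by (simp add: g_sym[of "coframe i"])
qed

lemma g_coframe: "j < 2 * n \<Longrightarrow> g (coframe j) v = (\<Sum>i<2 * n. frame_ginv i j * g (frame i) v)"
  by (simp add: coframe_def g_sum_left frame_ginv_sym)

lemma trace_D_cong:
  assumes "\<And>x y. eta x = 0 \<Longrightarrow> eta y = 0 \<Longrightarrow> B x y = B' x y"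
  shows "trace_D B = trace_D B'"
  unfolding trace_D_def using assms by simp

lemma trace_D_add: "trace_D (\<lambda>x y. A x y + B x y) = trace_D A + trace_D B"
  and trace_D_diff: "trace_D (\<lambda>x y. A x y - B x y) = trace_D A - trace_D B"
  and trace_D_minus: "trace_D (\<lambda>x y. - A x y) = - trace_D A"
  and trace_D_cmult: "trace_D (\<lambda>x y. c * A x y) = c * trace_D A"
  and trace_D_multc: "trace_D (\<lambda>x y. A x y * c) = trace_D A * c"
  unfolding trace_D_def
  by (simp_all add: sum.distrib distrib_left sum_subtractf right_diff_distrib sum_negf
      sum_distrib_left sum_distrib_right mult.left_commute mult.assoc)

lemma trace_D_transpose: "trace_D (\<lambda>x y. B y x) = trace_D B"
proof -
  have "trace_D (\<lambda>x y. B y x) = (\<Sum>j<2 * n. \<Sum>i<2 * n. frame_ginv i j * B (frame j) (frame i))"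
    unfolding trace_D_def by (rule sum.swap)
  also have "\<dots> = trace_D B"
    unfolding trace_D_def by (intro sum.cong refl) (simp add: frame_ginv_sym)
  finally show ?thesis .
qed

lemma trace_D_skew:
  assumes "\<And>x y. B x y = - B y x"
  shows "trace_D B = 0"
proof -
  have "B = (\<lambda>x y. - B y x)" by (intro ext) (rule assms)
  then have "trace_D B = trace_D (\<lambda>x y. - B y x)" by (rule arg_cong)
  also have "\<dots> = - trace_D (\<lambda>x y. B y x)" by (rule trace_D_minus)
  also have "\<dots> = - trace_D B" using trace_D_transpose[of B] by (rule arg_cong)
  finally show ?thesis by simp
qed

lemma trace_D_g: "trace_D g = 2 * real n"
proof -
  have "(\<Sum>j<2 * n. frame_ginv i j * g (frame i) (frame j)) = 1" if "i < 2 * n" for i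
    using frame_ginv_inverse[OF that that] by (simp add: g_sym[of "frame i"])
  then have "trace_D g = (\<Sum>i<2 * n. (1::real))"
    unfolding trace_D_def by (intro sum.cong) simp_all
  then show ?thesis by simp
qed

lemma trace_D_g_phi: "trace_D (\<lambda>x y. g x (phi y)) = 0"
proof (rule trace_D_skew)
  fix x y
  show "g x (phi y) = - g y (phi x)" using g_phi_skew[of x y] g_sym[of y "phi x"] by simp
qed

lemma trace_D_rank_one:
  assumes "eta v = 0" "linear l"
  shows "trace_D (\<lambda>x y. g x v * l y) = l v"
proof -
  have "trace_D (\<lambda>x y. g x v * l y) = (\<Sum>j<2 * n. g (coframe j) v * l (frame j))"
    unfolding trace_D_def by (subst sum.swap) (simp add: g_coframe sum_distrib_right mult.assoc)
  also have "\<dots> = l (\<Sum>j<2 * n. g (coframe j) v *\<^sub>R frame j)"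
    by (simp add: linear_sum[OF assms(2)] linear_rules[OF assms(2)])
  finally show ?thesis using frame_expansion[OF assms(1)] by simp
qed

abbreviation G :: "nat \<Rightarrow> 'm tens3 \<Rightarrow> bool" where
  "G i F \<equiv> Gclass n g phi xi eta i F"

abbreviation in_sum :: "nat set \<Rightarrow> 'm tens3 \<Rightarrow> bool" where
  "in_sum I F \<equiv> in_class n g phi xi eta I F"

lemma Gclass_iff:
  "n = 1 \<Longrightarrow> G 1 F \<longleftrightarrow> Fspace phi xi eta F \<and> (\<forall>x y z. F x y z = 0)"
  "n \<noteq> 1 \<Longrightarrow> G 1 F \<longleftrightarrow> Fspace phi xi eta F \<and> (\<forall>x y z. F x y z = 1 / (2 * (real n - 1)) *
     (g x (phi y) * theta n g eta F (phi z) - g x (phi z) * theta n g eta F (phi y)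
      - g (phi x) (phi y) * theta n g eta F (phi (phi z))
      + g (phi x) (phi z) * theta n g eta F (phi (phi y))))"
  "G 2 F \<longleftrightarrow> Fspace phi xi eta F \<and> (\<forall>x y z. F (phi x) (phi y) z = - F x y z)
     \<and> (\<forall>x. theta n g eta F x = 0)"
  "G 3 F \<longleftrightarrow> Fspace phi xi eta F \<and> (\<forall>x y z. F (phi x) (phi y) z = F x y z)
     \<and> (\<forall>x y z. F x y z = - F y x z)"
  "G 4 F \<longleftrightarrow> Fspace phi xi eta F \<and> (\<forall>x y z. F (phi x) (phi y) z = F x y z)
     \<and> (\<forall>x y z. F x y z + F y z x + F z x y = 0)"
  "G 5 F \<longleftrightarrow> Fspace phi xi eta F \<and> (\<forall>x y z. F x y z = theta n g eta F xi / (2 * real n) *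
     (eta y * g (phi x) (phi z) - eta z * g (phi x) (phi y)))"
  "G 8 F \<longleftrightarrow> Fspace phi xi eta F \<and> (\<forall>x y z. F x y z = - eta y * F x z xi + eta z * F x y xi)
     \<and> (\<forall>x y. F x y xi = F y x xi \<and> F x y xi = - F (phi x) (phi y) xi) \<and> theta n g eta F xi = 0"
  "G 9 F \<longleftrightarrow> Fspace phi xi eta F \<and> (\<forall>x y z. F x y z = - eta y * F x z xi + eta z * F x y xi)
     \<and> (\<forall>x y. F x y xi = - F y x xi \<and> F x y xi = F (phi x) (phi y) xi)"
  "G 11 F \<longleftrightarrow> Fspace phi xi eta F \<and> (\<forall>x y z. F x y z = eta x * F xi (phi y) (phi z))"
  unfolding Gclass_def Let_def by (simp_all del: phi_phi)

lemma FspaceD: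
  assumes "Fspace phi xi eta F"
  shows "trilinear F" "F x y z = - F x z y"
    "F x y z = F x (phi y) (phi z) - eta y * F x z xi + eta z * F x y xi"
  using assms unfolding Fspace_def by blast+

lemma Fspace_xi_xi: "Fspace phi xi eta F \<Longrightarrow> F x xi xi = 0"
  using FspaceD(2)[of F x xi xi] by simp

lemma Fspace_phi_phi:
  "Fspace phi xi eta F \<Longrightarrow> F x (phi y) (phi z) = F x y z - eta y * F x xi z - eta z * F x y xi"
  using FspaceD(3)[of F x y z] FspaceD(2)[of F x z xi] by simp

lemma Fspace_diff:
  assumes A: "Fspace phi xi eta A" and B: "Fspace phi xi eta B"
  shows "Fspace phi xi eta (\<lambda>x y z. A x y z - B x y z)"
  unfolding Fspace_def
proof (intro conjI allI)
  show "trilinear (\<lambda>x y z. A x y z - B x y z)"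
    by (rule trilinearI) (simp_all add: trilinear_simps[OF FspaceD(1)[OF A]]
        trilinear_simps[OF FspaceD(1)[OF B]] algebra_simps)
  fix x y z
  show "A x y z - B x y z = - (A x z y - B x z y)"
    using FspaceD(2)[OF A, of x y z] FspaceD(2)[OF B, of x y z] by simp
  show "A x y z - B x y z = A x (phi y) (phi z) - B x (phi y) (phi z)
      - eta y * (A x z xi - B x z xi) + eta z * (A x y xi - B x y xi)"
    using FspaceD(3)[OF A, of x y z] FspaceD(3)[OF B, of x y z] by (simp add: algebra_simps)
qed

lemma theta_zero: "trilinear F \<Longrightarrow> theta n g eta F 0 = 0"
  by (simp add: theta_eq_trace_D trilinear_simps trace_D_def)

lemma theta_diff: "theta n g eta (\<lambda>x y z. A x y z - B x y z) w = theta n g eta A w - theta n g eta B w"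
  by (simp add: theta_eq_trace_D trace_D_diff)

lemma linear_theta: "trilinear F \<Longrightarrow> linear (theta n g eta F)"
  by (rule linearI) (simp_all add: theta_eq_trace_D trilinear_simps trace_D_add trace_D_cmult)

definition killing_tensor :: "'m tens3 \<Rightarrow> bool" where
  "killing_tensor F \<longleftrightarrow> (\<forall>x y. F x (phi y) xi + F y (phi x) xi = 0)"

lemma Gclass_xi_free:
  assumes "i \<in> {1, 2, 3, 4, 11}" and F: "G i F"
  shows "F x y xi = 0"
proof -
  have Fs: "Fspace phi xi eta F" using F unfolding Gclass_def by blast
  note F_simps = trilinear_simps[OF FspaceD(1)[OF Fs]]
  have xi_second: "F x y xi = 0" if "\<And>a b. F a xi b = 0"
    using FspaceD(2)[OF Fs, of x y xi] that by simp
  consider (G1) "i = 1" | (G2) "i = 2" | (G3) "i = 3" | (G4) "i = 4" | (G11) "i = 11"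
    using assms(1) by auto
  then show ?thesis
  proof cases
    case G1
    show ?thesis
    proof (cases "n = 1")
      case True
      then show ?thesis using F \<open>i = 1\<close> Gclass_iff(1) by blast
    next
      case False
      then show ?thesis using F \<open>i = 1\<close> Gclass_iff(2)
        by (simp add: theta_zero[OF FspaceD(1)[OF Fs]])
    qed
  next
    case G2
    then have "F (phi a) (phi xi) b = - F a xi b" for a b using F Gclass_iff(3) by blast
    then show ?thesis by (intro xi_second) (simp add: F_simps)
  next
    case G3
    then have "F (phi a) (phi xi) b = F a xi b" for a b using F Gclass_iff(4) by blast
    then show ?thesis by (intro xi_second) (simp add: F_simps)
  next
    case G4
    then have "F (phi a) (phi xi) b = F a xi b" for a b using F Gclass_iff(5) by blast
    then show ?thesis by (intro xi_second) (simp add: F_simps)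
  next
    case G11
    then have "F x y xi = eta x * F xi (phi y) (phi xi)" using F Gclass_iff(9) by blast
    then show ?thesis by (simp add: F_simps)
  qed
qed

lemma Gclass5_killing_tensor:
  assumes "G 5 F"
  shows "killing_tensor F"
  unfolding killing_tensor_def
proof (intro allI)
  fix x y
  have "g y (phi x) = - g x (phi y)" using g_sym[of y "phi x"] g_phi_skew[of x y] by simp
  then show "F x (phi y) xi + F y (phi x) xi = 0"
    using assms Gclass_iff(6) by (simp add: g_phi_skew algebra_simps)
qed

lemma Gclass8_killing_tensor:
  assumes F: "G 8 F"
  shows "killing_tensor F"
  unfolding killing_tensor_def
proof (intro allI)
  fix x y
  have Fs: "Fspace phi xi eta F" and sym: "\<And>x y. F x y xi = F y x xi"
    and anti: "\<And>x y. F x y xi = - F (phi x) (phi y) xi"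
    using F Gclass_iff(7) by blast+
  note F_simps = trilinear_simps[OF FspaceD(1)[OF Fs]]
  have "F xi (phi a) xi = 0" for a using anti[of xi "phi a"] by (simp add: F_simps)
  have "F y (phi x) xi = F (phi x) y xi" by (rule sym)
  also have "\<dots> = - F (phi (phi x)) (phi y) xi" by (rule anti)
  also have "\<dots> = - F x (phi y) xi" using \<open>\<And>a. F xi (phi a) xi = 0\<close> by (simp add: F_simps)
  finally show "F x (phi y) xi + F y (phi x) xi = 0" by simp
qed

lemma Gclass9_killing_tensor:
  assumes F: "G 9 F"
  shows "killing_tensor F"
  unfolding killing_tensor_def
proof (intro allI)
  fix x y
  have Fs: "Fspace phi xi eta F" and skew: "\<And>x y. F x y xi = - F y x xi"
    and inv: "\<And>x y. F x y xi = F (phi x) (phi y) xi"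
    using F Gclass_iff(8) by blast+
  note F_simps = trilinear_simps[OF FspaceD(1)[OF Fs]]
  have "F xi (phi a) xi = 0" for a using inv[of xi "phi a"] by (simp add: F_simps)
  have "F y (phi x) xi = - F (phi x) y xi" by (rule skew)
  also have "\<dots> = - F (phi (phi x)) (phi y) xi" by (simp only: inv[of "phi x" y])
  also have "\<dots> = - F x (phi y) xi" using \<open>\<And>a. F xi (phi a) xi = 0\<close> by (simp add: F_simps)
  finally show "F x (phi y) xi + F y (phi x) xi = 0" by simp
qed

lemma Gclass_killing_tensor:
  assumes "i \<in> {1, 2, 3, 4, 5, 8, 9, 11}" and "G i F"
  shows "killing_tensor F"
proof -
  consider "i \<in> {1, 2, 3, 4, 11}" | "i = 5" | "i = 8" | "i = 9" using assms(1) by auto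
  then show ?thesis
  proof cases
    case 1
    then have "F a b xi = 0" for a b using assms(2) by (rule Gclass_xi_free)
    then show ?thesis unfolding killing_tensor_def by simp
  qed (use assms(2) Gclass5_killing_tensor Gclass8_killing_tensor Gclass9_killing_tensor in auto)
qed

lemma killing_tensor_if_in_class:
  assumes "in_sum {1, 2, 3, 4, 5, 8, 9, 11} F"
  shows "killing_tensor F"
proof -
  obtain C where C: "\<forall>i\<in>{1, 2, 3, 4, 5, 8, 9, 11}. G i (C i)"
    and F: "\<forall>x y z. F x y z = (\<Sum>i\<in>{1, 2, 3, 4, 5, 8, 9, 11}. C i x y z)"
    using assms unfolding in_class_def by blast
  show ?thesis unfolding killing_tensor_def
  proof (intro allI)
    fix x y
    have "F x (phi y) xi + F y (phi x) xi =
        (\<Sum>i\<in>{1, 2, 3, 4, 5, 8, 9, 11::nat}. C i x (phi y) xi + C i y (phi x) xi)"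
      by (simp add: F sum.distrib)
    also have "\<dots> = 0"
      using C Gclass_killing_tensor unfolding killing_tensor_def by (intro sum.neutral) blast
    finally show "F x (phi y) xi + F y (phi x) xi = 0" .
  qed
qed

subsection \<open>Horizontal tensors: the classes G_1 to G_4\<close>

definition horizontal :: "'m tens3 \<Rightarrow> bool" where
  "horizontal T \<longleftrightarrow> trilinear T
     \<and> (\<forall>y z. T xi y z = 0) \<and> (\<forall>x z. T x xi z = 0) \<and> (\<forall>x y. T x y xi = 0)
     \<and> (\<forall>x y z. T x y z = - T x z y) \<and> (\<forall>x y z. T x (phi y) (phi z) = T x y z)"

lemma horizontalD:
  assumes "horizontal T"
  shows "trilinear T" "T xi y z = 0" "T x xi z = 0" "T x y xi = 0" "T x y z = - T x z y"
    "T x (phi y) (phi z) = T x y z"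
  using assms unfolding horizontal_def by blast+

lemma horizontal_Fspace:
  assumes "horizontal T"
  shows "Fspace phi xi eta T"
  unfolding Fspace_def
proof (intro conjI allI)
  show "trilinear T" by (rule horizontalD(1)[OF assms])
  fix x y z
  show "T x y z = - T x z y" by (rule horizontalD(5)[OF assms])
  show "T x y z = T x (phi y) (phi z) - eta y * T x z xi + eta z * T x y xi"
    using horizontalD(4,6)[OF assms] by simp
qed

lemma horizontal_lincomb:
  assumes A: "horizontal A" and B: "horizontal B"
  shows "horizontal (\<lambda>x y z. a * A x y z + b * B x y z)"
  unfolding horizontal_def
proof (intro conjI allI)
  show "trilinear (\<lambda>x y z. a * A x y z + b * B x y z)"
    by (rule trilinearI) (simp_all add: trilinear_simps[OF horizontalD(1)[OF A]]
        trilinear_simps[OF horizontalD(1)[OF B]] algebra_simps)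
  fix x y z
  show "a * A xi y z + b * B xi y z = 0" "a * A x xi z + b * B x xi z = 0"
    "a * A x y xi + b * B x y xi = 0"
    using horizontalD(2-4)[OF A] horizontalD(2-4)[OF B] by simp_all
  show "a * A x y z + b * B x y z = - (a * A x z y + b * B x z y)"
    using horizontalD(5)[OF A, of x y z] horizontalD(5)[OF B, of x y z] by simp
  show "a * A x (phi y) (phi z) + b * B x (phi y) (phi z) = a * A x y z + b * B x y z"
    using horizontalD(6)[OF A, of x y z] horizontalD(6)[OF B, of x y z] by simp
qed

lemma horizontal_phi_phi_first:
  assumes "horizontal T"
  shows "T (phi (phi x)) (phi (phi y)) z = T x y z"
  using horizontalD(2,3)[OF assms] by (simp add: trilinear_simps[OF horizontalD(1)[OF assms]])

lemma horizontal_phi_first: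
  assumes T: "horizontal T"
  shows "horizontal (\<lambda>x y z. T (phi x) (phi y) z)"
  unfolding horizontal_def
proof (intro conjI allI)
  note T_simps = trilinear_simps[OF horizontalD(1)[OF T]]
  show "trilinear (\<lambda>x y z. T (phi x) (phi y) z)" by (rule trilinearI) (simp_all add: T_simps)
  fix x y z
  show "T (phi xi) (phi y) z = 0" "T (phi x) (phi xi) z = 0" "T (phi x) (phi y) xi = 0"
    using horizontalD(4)[OF T] by (simp_all add: T_simps)
  show "T (phi x) (phi (phi y)) (phi z) = T (phi x) (phi y) z" by (rule horizontalD(6)[OF T])
  have "T (phi x) (phi y) z = T (phi x) (phi (phi y)) (phi z)" by (rule horizontalD(6)[OF T, symmetric])
  also have "\<dots> = T (phi x) y (phi z)" using horizontalD(3)[OF T] by (simp add: T_simps)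
  also have "\<dots> = - T (phi x) (phi z) y" by (rule horizontalD(5)[OF T])
  finally show "T (phi x) (phi y) z = - T (phi x) (phi z) y" .
qed

definition G1_tensor :: "(real^'m \<Rightarrow> real) \<Rightarrow> 'm tens3" where
  "G1_tensor th x y z = 1 / (2 * (real n - 1)) *
     (g x (phi y) * th (phi z) - g x (phi z) * th (phi y)
      - g (phi x) (phi y) * th (phi (phi z)) + g (phi x) (phi z) * th (phi (phi y)))"

lemma G1_tensor_Fspace:
  assumes th: "linear th"
  shows "Fspace phi xi eta (G1_tensor th)"
  unfolding Fspace_def
proof (intro conjI allI)
  note th_simps = linear_rules[OF th, simplified]
  show "trilinear (G1_tensor th)"
    by (rule trilinearI) (simp_all add: G1_tensor_def th_simps algebra_simps)
  fix x y z
  show "G1_tensor th x y z = - G1_tensor th x z y" by (simp add: G1_tensor_def algebra_simps)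
  show "G1_tensor th x y z = G1_tensor th x (phi y) (phi z)
      - eta y * G1_tensor th x z xi + eta z * G1_tensor th x y xi"
    using g_phi_skew[of x y] g_phi_skew[of x z] by (simp add: G1_tensor_def th_simps algebra_simps)
qed

lemma G1_tensor_phi_first:
  "linear th \<Longrightarrow> G1_tensor th (phi x) (phi y) z = - G1_tensor th x y z"
  using g_phi_skew[of x y] g_phi_skew[of x z]
  by (simp add: G1_tensor_def linear_rules algebra_simps)

lemma trace_D_g_phi_phi: "trace_D (\<lambda>x y. g (phi x) (phi y)) = - (2 * real n)"
  using trace_D_cong[of "\<lambda>x y. g (phi x) (phi y)" "\<lambda>x y. - g x y"] by (simp add: trace_D_minus trace_D_g)

lemma theta_G1_tensor:
  assumes th: "linear th" and "n \<noteq> 1"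
  shows "theta n g eta (G1_tensor th) w = th (phi (phi w))"
proof -
  have tr2: "trace_D (\<lambda>x y. g x (phi w) * th (phi y)) = th (phi (phi w))"
    using trace_D_rank_one[of "phi w" "th \<circ> phi"] linear_compose[OF linear_phi th] by (simp del: phi_phi)
  have tr4: "trace_D (\<lambda>x y. g (phi x) (phi w) * th (phi (phi y))) = - th (phi (phi w))"
  proof -
    have "trace_D (\<lambda>x y. g (phi x) (phi w) * th (phi (phi y))) = trace_D (\<lambda>x y. - (g x (phi (phi w)) * th y))"
      by (rule trace_D_cong) (simp add: g_phi_skew)
    then show ?thesis using trace_D_rank_one[of "phi (phi w)" th] th by (simp add: trace_D_minus del: phi_phi)
  qed
  have "theta n g eta (G1_tensor th) w = 1 / (2 * (real n - 1)) *
      (trace_D (\<lambda>x y. g x (phi y)) * th (phi w) - trace_D (\<lambda>x y. g x (phi w) * th (phi y))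
       - trace_D (\<lambda>x y. g (phi x) (phi y)) * th (phi (phi w))
       + trace_D (\<lambda>x y. g (phi x) (phi w) * th (phi (phi y))))"
    unfolding theta_eq_trace_D G1_tensor_def
    by (simp only: trace_D_cmult trace_D_add trace_D_diff trace_D_multc)
  also have "\<dots> = th (phi (phi w))"
    using \<open>n \<noteq> 1\<close> n_ge_1 by (simp only: trace_D_g_phi tr2 trace_D_g_phi_phi tr4) (simp add: field_simps)
  finally show ?thesis .
qed

lemma n1_frame_expansion:
  assumes "n = 1" "eta v = 0"
  shows "v = g (coframe 0) v *\<^sub>R frame 0 + g (coframe 1) v *\<^sub>R frame 1"
  using frame_expansion[OF assms(2)] assms(1) by (simp add: numeral_2_eq_2)

text \<open>For n = 1, phi restricted to D is an involution of trace 0, hence has determinant -1.\<close>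

lemma n1_phi_frame:
  assumes "n = 1"
  obtains p q r s where "phi (frame 0) = p *\<^sub>R frame 0 + q *\<^sub>R frame 1"
    "phi (frame 1) = r *\<^sub>R frame 0 + s *\<^sub>R frame 1" "p * s - q * r = -1"
proof -
  define p q r s where "p = g (coframe 0) (phi (frame 0))" and "q = g (coframe 1) (phi (frame 0))"
    and "r = g (coframe 0) (phi (frame 1))" and "s = g (coframe 1) (phi (frame 1))"
  have ph0: "phi (frame 0) = p *\<^sub>R frame 0 + q *\<^sub>R frame 1"
    using n1_frame_expansion[OF assms, of "phi (frame 0)"] by (simp add: p_def q_def del: phi_phi)
  have ph1: "phi (frame 1) = r *\<^sub>R frame 0 + s *\<^sub>R frame 1"
    using n1_frame_expansion[OF assms, of "phi (frame 1)"] by (simp add: r_def s_def del: phi_phi)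
  have "p + s = (\<Sum>j<2 * n. g (coframe j) (phi (frame j)))"
    using assms by (simp add: numeral_2_eq_2 p_def s_def)
  also have "\<dots> = trace_D (\<lambda>x y. g x (phi y))"
    unfolding trace_D_def by (subst sum.swap) (simp add: g_coframe)
  finally have "p + s = 0" using trace_D_g_phi by simp
  have frames: "0 < 2 * n" "1 < 2 * n" using assms by auto
  have "1 = g (coframe 0) (phi (phi (frame 0)))" using frames g_coframe_frame by simp
  also have "\<dots> = p * p + q * r"
    using frames by (simp only: ph0 ph1 phi_simps g_simps) (simp add: g_coframe_frame)
  finally have "p * p + q * r = 1" by simp
  then have "p * s - q * r = -1" using \<open>p + s = 0\<close> by (simp add: eq_neg_iff_add_eq_0[symmetric])
  then show ?thesis using ph0 ph1 that by blast
qed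

lemma n1_skew_phi_invariant_form_zero:
  assumes "n = 1" and B: "bilinear_form B" and skew: "\<And>a b. B a b = - B b a"
    and inv: "\<And>a b. B (phi a) (phi b) = B a b"
  shows "B a b = 0"
proof -
  note B_simps = bilinear_form_simps[OF B]
  have diag: "B c c = 0" for c using skew[of c c] by simp
  obtain p q r s where ph0: "phi (frame 0) = p *\<^sub>R frame 0 + q *\<^sub>R frame 1"
    and ph1: "phi (frame 1) = r *\<^sub>R frame 0 + s *\<^sub>R frame 1" and det: "p * s - q * r = -1"
    using n1_phi_frame[OF assms(1)] by blast
  have "B (frame 0) (frame 1) = B (phi (frame 0)) (phi (frame 1))" by (rule inv[symmetric])
  also have "\<dots> = B (p *\<^sub>R frame 0 + q *\<^sub>R frame 1) (r *\<^sub>R frame 0 + s *\<^sub>R frame 1)"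
    by (simp only: ph0 ph1)
  also have "\<dots> = (p * s - q * r) * B (frame 0) (frame 1)"
    using skew[of "frame 1" "frame 0"] by (simp add: B_simps diag algebra_simps)
  finally have B01: "B (frame 0) (frame 1) = 0" using det by simp
  have "B (u0 *\<^sub>R frame 0 + u1 *\<^sub>R frame 1) (v0 *\<^sub>R frame 0 + v1 *\<^sub>R frame 1) = 0" for u0 u1 v0 v1
    using B01 skew[of "frame 1" "frame 0"] by (simp add: B_simps diag)
  then have "B (phi a) (phi b) = 0"
    using n1_frame_expansion[OF assms(1), of "phi a"] n1_frame_expansion[OF assms(1), of "phi b"]
    by (metis eta_phi)
  then show ?thesis using inv by simp
qed

lemma horizontal_n1_zero:
  assumes "n = 1" "horizontal T"
  shows "T x y z = 0"
proof -
  have "bilinear_form (T x)" by (rule trilinear_bilinear_form_23[OF horizontalD(1)[OF assms(2)]])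
  then show ?thesis
    using n1_skew_phi_invariant_form_zero[OF assms(1)] horizontalD(5,6)[OF assms(2)] by blast
qed

lemma horizontal_phi_anti_in_G12:
  assumes T: "horizontal T" and anti: "\<And>x y z. T (phi x) (phi y) z = - T x y z"
  shows "in_sum {1, 2} T"
proof (cases "n = 1")
  case True
  then have T0: "T x y z = 0" for x y z using T horizontal_n1_zero by blast
  have "T = (\<lambda>x y z. 0)" using T0 by (intro ext)
  then have "G 1 (\<lambda>x y z. 0)" using True Gclass_iff(1) horizontal_Fspace[OF T] by simp
  moreover have "G 2 T"
    using Gclass_iff(3) horizontal_Fspace[OF T] anti T0 by (simp add: theta_eq_trace_D trace_D_def)
  ultimately have "in_sum ({1} \<union> {2}) T"
    by (rule in_class_add[OF in_class_singleton in_class_singleton]) simp_all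
  then show ?thesis by (simp only: Un_insert_left Un_empty_left)
next
  case False
  define th where "th = theta n g eta T"
  have th: "linear th" unfolding th_def by (rule linear_theta[OF horizontalD(1)[OF T]])
  have th_xi: "th xi = 0" by (simp add: th_def theta_eq_trace_D horizontalD(4)[OF T] trace_D_def)
  have "G 1 (G1_tensor th)"
    using False Gclass_iff(2) G1_tensor_Fspace[OF th]
    by (simp add: theta_G1_tensor[OF th False]) (simp add: G1_tensor_def)
  moreover have "G 2 (\<lambda>x y z. T x y z - G1_tensor th x y z)"
  proof -
    have "theta n g eta T x - th (phi (phi x)) = 0" for x
      using th_xi by (simp add: th_def[symmetric] linear_rules[OF th])
    then show ?thesis
      using Gclass_iff(3) Fspace_diff[OF horizontal_Fspace[OF T] G1_tensor_Fspace[OF th]]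
        anti G1_tensor_phi_first[OF th] by (simp add: theta_diff theta_G1_tensor[OF th False])
  qed
  ultimately have "in_sum ({1} \<union> {2}) T"
    by (rule in_class_add[OF in_class_singleton in_class_singleton]) simp_all
  then show ?thesis by (simp only: Un_insert_left Un_empty_left)
qed

lemma horizontal_phi_invariant_13:
  assumes T: "horizontal T" and inv: "\<And>x y z. T (phi x) (phi y) z = T x y z"
  shows "T (phi x) y (phi z) = T x y z"
  using inv[of "phi x" y "phi z"] horizontalD(2)[OF T] horizontalD(6)[OF T, of x y z]
  by (simp add: trilinear_simps[OF horizontalD(1)[OF T]])

lemma horizontal_cyclic_mean:
  assumes T: "horizontal T" and inv: "\<And>x y z. T (phi x) (phi y) z = T x y z"
  shows "horizontal (\<lambda>x y z. (T x y z + T y z x + T z x y) / 3)"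
  unfolding horizontal_def
proof (intro conjI allI)
  note T_simps = trilinear_simps[OF horizontalD(1)[OF T]]
  show "trilinear (\<lambda>x y z. (T x y z + T y z x + T z x y) / 3)"
    by (rule trilinearI) (simp_all add: T_simps algebra_simps add_divide_distrib)
  fix x y z
  show "(T xi y z + T y z xi + T z xi y) / 3 = 0" "(T x xi z + T xi z x + T z x xi) / 3 = 0"
    "(T x y xi + T y xi x + T xi x y) / 3 = 0"
    using horizontalD(2-4)[OF T] by simp_all
  show "(T x y z + T y z x + T z x y) / 3 = - ((T x z y + T z y x + T y x z) / 3)"
    using horizontalD(5)[OF T, of x y z] horizontalD(5)[OF T, of y z x] horizontalD(5)[OF T, of z x y]
    by (simp add: field_simps)
  show "(T x (phi y) (phi z) + T (phi y) (phi z) x + T (phi z) x (phi y)) / 3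
      = (T x y z + T y z x + T z x y) / 3"
    using horizontalD(6)[OF T, of x y z] inv[of y z x] horizontal_phi_invariant_13[OF T inv, of z x y]
    by simp
qed

lemma horizontal_phi_invariant_in_G34:
  assumes T: "horizontal T" and inv: "\<And>x y z. T (phi x) (phi y) z = T x y z"
  shows "in_sum {3, 4} T"
proof -
  define C where "C = (\<lambda>x y z. (T x y z + T y z x + T z x y) / 3)"
  have C: "horizontal C" unfolding C_def by (rule horizontal_cyclic_mean[OF T inv])
  have skew: "T x y z = - T x z y" for x y z by (rule horizontalD(5)[OF T])
  have C_inv: "C (phi x) (phi y) z = C x y z" for x y z
    using inv[of x y z] horizontal_phi_invariant_13[OF T inv, of y z x] horizontalD(6)[OF T, of z x y]
    by (simp add: C_def)
  have "G 3 C" unfolding Gclass_iff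
  proof (intro conjI allI)
    show "Fspace phi xi eta C" using C by (rule horizontal_Fspace)
    fix x y z
    show "C (phi x) (phi y) z = C x y z" by (rule C_inv)
    show "C x y z = - C y x z" using skew[of x y z] skew[of y z x] skew[of z x y]
      by (simp add: C_def field_simps)
  qed
  moreover have "G 4 (\<lambda>x y z. T x y z - C x y z)" unfolding Gclass_iff
  proof (intro conjI allI)
    show "Fspace phi xi eta (\<lambda>x y z. T x y z - C x y z)"
      using Fspace_diff horizontal_Fspace T C by blast
    fix x y z
    show "T (phi x) (phi y) z - C (phi x) (phi y) z = T x y z - C x y z" using inv C_inv by simp
    show "T x y z - C x y z + (T y z x - C y z x) + (T z x y - C z x y) = 0"
      by (simp add: C_def field_simps)
  qed
  ultimately have "in_sum ({3} \<union> {4}) T"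
    by (rule in_class_add[OF in_class_singleton in_class_singleton]) simp_all
  then show ?thesis by (simp only: Un_insert_left Un_empty_left)
qed

lemma horizontal_in_G1234:
  assumes T: "horizontal T"
  shows "in_sum {1, 2, 3, 4} T"
proof -
  define Tm where "Tm = (\<lambda>x y z. 1 / 2 * T x y z + (- 1 / 2) * T (phi x) (phi y) z)"
  define Tp where "Tp = (\<lambda>x y z. 1 / 2 * T x y z + 1 / 2 * T (phi x) (phi y) z)"
  have "horizontal Tm" "horizontal Tp"
    unfolding Tm_def Tp_def using horizontal_lincomb[OF T horizontal_phi_first[OF T]] by blast+
  moreover have "Tm (phi x) (phi y) z = - Tm x y z" "Tp (phi x) (phi y) z = Tp x y z" for x y z
    by (simp_all only: Tm_def Tp_def horizontal_phi_phi_first[OF T])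
  ultimately have "in_sum ({1, 2} \<union> {3, 4}) T"
    using horizontal_phi_anti_in_G12 horizontal_phi_invariant_in_G34
    by (intro in_class_add[of _ _ _ _ _ _ Tm _ Tp]) (auto simp: Tm_def Tp_def)
  then show ?thesis by (simp only: Un_insert_left Un_empty_left)
qed

subsection \<open>The classes G_5, G_8, G_9, G_11 and the decomposition\<close>

definition eta_wedge :: "(real^'m \<Rightarrow> real^'m \<Rightarrow> real) \<Rightarrow> 'm tens3" where
  "eta_wedge B x y z = - eta y * B x z + eta z * B x y"

lemma eta_wedge_xi: "(\<And>x. B x xi = 0) \<Longrightarrow> eta_wedge B x y xi = B x y"
  by (simp add: eta_wedge_def)

lemma eta_wedge_Fspace:
  assumes B: "bilinear_form B" and B_xi: "\<And>x. B x xi = 0"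
  shows "Fspace phi xi eta (eta_wedge B)"
  unfolding Fspace_def
proof (intro conjI allI)
  show "trilinear (eta_wedge B)"
    by (rule trilinearI) (simp_all add: eta_wedge_def bilinear_form_simps[OF B] algebra_simps)
  fix x y z
  show "eta_wedge B x y z = - eta_wedge B x z y" by (simp add: eta_wedge_def)
  show "eta_wedge B x y z = eta_wedge B x (phi y) (phi z) - eta y * eta_wedge B x z xi
      + eta z * eta_wedge B x y xi"
    by (simp add: eta_wedge_def B_xi)
qed

lemma theta_eta_wedge_xi: "theta n g eta (eta_wedge B) xi = trace_D B"
  unfolding theta_eq_trace_D by (rule trace_D_cong) (simp add: eta_wedge_def)

lemma eta_wedge_g_phi_phi_in_G5: "G 5 (eta_wedge (\<lambda>x y. c * g (phi x) (phi y)))"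
  unfolding Gclass_iff
proof (intro conjI allI)
  show "Fspace phi xi eta (eta_wedge (\<lambda>x y. c * g (phi x) (phi y)))"
    by (rule eta_wedge_Fspace, rule bilinear_formI) (simp_all add: algebra_simps)
  have "theta n g eta (eta_wedge (\<lambda>x y. c * g (phi x) (phi y))) xi / (2 * real n) = - c"
    using n_ge_1 by (simp add: theta_eta_wedge_xi trace_D_cmult trace_D_g_phi_phi del: g_phi_phi)
  then show "eta_wedge (\<lambda>x y. c * g (phi x) (phi y)) x y z =
      theta n g eta (eta_wedge (\<lambda>x y. c * g (phi x) (phi y))) xi / (2 * real n) *
      (eta y * g (phi x) (phi z) - eta z * g (phi x) (phi y))" for x y z
    by (simp only:) (simp add: eta_wedge_def algebra_simps del: g_phi_phi)
qed

lemma eta_wedge_in_G8: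
  assumes B: "bilinear_form S" and S_xi: "\<And>x. S x xi = 0" and sym: "\<And>x y. S x y = S y x"
    and anti: "\<And>x y. S (phi x) (phi y) = - S x y" and tr: "trace_D S = 0"
  shows "G 8 (eta_wedge S)"
  unfolding Gclass_iff
proof (intro conjI allI)
  show "Fspace phi xi eta (eta_wedge S)" by (rule eta_wedge_Fspace[OF B S_xi])
  show "theta n g eta (eta_wedge S) xi = 0" by (simp add: theta_eta_wedge_xi tr)
  fix x y z
  show "eta_wedge S x y z = - eta y * eta_wedge S x z xi + eta z * eta_wedge S x y xi"
    by (simp add: eta_wedge_xi[of S, OF S_xi]) (simp add: eta_wedge_def)
  show "eta_wedge S x y xi = eta_wedge S y x xi" using sym[of x y] by (simp add: eta_wedge_xi[of S, OF S_xi])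
  show "eta_wedge S x y xi = - eta_wedge S (phi x) (phi y) xi"
    using anti[of x y] by (simp add: eta_wedge_xi[of S, OF S_xi])
qed

lemma eta_wedge_in_G9:
  assumes B: "bilinear_form A" and A_xi: "\<And>x. A x xi = 0" and skew: "\<And>x y. A x y = - A y x"
    and inv: "\<And>x y. A (phi x) (phi y) = A x y"
  shows "G 9 (eta_wedge A)"
  unfolding Gclass_iff
proof (intro conjI allI)
  show "Fspace phi xi eta (eta_wedge A)" by (rule eta_wedge_Fspace[OF B A_xi])
  fix x y z
  show "eta_wedge A x y z = - eta y * eta_wedge A x z xi + eta z * eta_wedge A x y xi"
    by (simp add: eta_wedge_xi[of A, OF A_xi]) (simp add: eta_wedge_def)
  show "eta_wedge A x y xi = - eta_wedge A y x xi" using skew[of x y] by (simp add: eta_wedge_xi[of A, OF A_xi])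
  show "eta_wedge A x y xi = eta_wedge A (phi x) (phi y) xi"
    using inv[of x y] by (simp add: eta_wedge_xi[of A, OF A_xi])
qed

text \<open>Subtracting the multiple of g(phi -, phi -) with the same trace leaves a trace-free part in G_8.\<close>

lemma eta_wedge_in_G58:
  assumes B: "bilinear_form S" and S_xi: "\<And>x. S x xi = 0" and sym: "\<And>x y. S x y = S y x"
    and anti: "\<And>x y. S (phi x) (phi y) = - S x y"
  shows "in_sum {5, 8} (eta_wedge S)"
proof -
  define c where "c = trace_D S / (2 * real n)"
  define S0 where "S0 x y = S x y + c * g (phi x) (phi y)" for x y
  have G5: "G 5 (eta_wedge (\<lambda>x y. (- c) * g (phi x) (phi y)))" by (rule eta_wedge_g_phi_phi_in_G5)
  have G8: "G 8 (eta_wedge S0)"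
  proof (rule eta_wedge_in_G8)
    show "bilinear_form S0"
      unfolding S0_def by (rule bilinear_formI) (simp_all add: bilinear_form_simps[OF B] algebra_simps)
    show "S0 x xi = 0" for x by (simp add: S0_def S_xi)
    show "S0 x y = S0 y x" for x y using sym[of x y] g_sym[of "phi x" "phi y"] by (simp add: S0_def)
    show "S0 (phi x) (phi y) = - S0 x y" for x y
      using anti[of x y] by (simp add: S0_def algebra_simps del: phi_phi)
    have "trace_D S0 = trace_D S + c * trace_D (\<lambda>x y. g (phi x) (phi y))"
      unfolding S0_def[abs_def] by (simp only: trace_D_add trace_D_cmult)
    then show "trace_D S0 = 0" using n_ge_1 by (simp add: trace_D_g_phi_phi c_def del: g_phi_phi)
  qed
  have "in_sum ({5} \<union> {8}) (eta_wedge S)"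
    by (rule in_class_add[OF in_class_singleton[OF G5] in_class_singleton[OF G8]])
      (simp_all add: eta_wedge_def S0_def algebra_simps del: g_phi_phi)
  then show ?thesis by (simp only: Un_insert_left Un_empty_left)
qed

lemma killing_tensorD:
  assumes F: "Fspace phi xi eta F" and K: "killing_tensor F"
  shows "F (phi x) (phi y) xi = - F y x xi"
proof -
  have "F (phi x) (phi y) xi + F y (phi (phi x)) xi = 0" using K unfolding killing_tensor_def by blast
  then show ?thesis using Fspace_xi_xi[OF F] by (simp add: trilinear_simps[OF FspaceD(1)[OF F]])
qed

lemma eta_wedge_in_G589:
  assumes B: "bilinear_form B" and B_xi: "\<And>x. B x xi = 0"
    and K: "\<And>x y. B (phi x) (phi y) = - B y x"
  shows "in_sum {5, 8, 9} (eta_wedge B)"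
proof -
  note B_simps = bilinear_form_simps[OF B]
  have xi_B: "B xi x = 0" for x using K[of x xi] by (simp add: B_simps)
  define S where "S x y = (B x y + B y x) / 2" for x y
  define A where "A x y = (B x y - B y x) / 2" for x y
  have "in_sum {5, 8} (eta_wedge S)"
  proof (rule eta_wedge_in_G58)
    show "bilinear_form S" unfolding S_def by (rule bilinear_formI) (simp_all add: B_simps field_simps)
    show "S x xi = 0" "S x y = S y x" for x y by (simp_all add: S_def B_xi xi_B)
    show "S (phi x) (phi y) = - S x y" for x y using K[of x y] K[of y x] by (simp add: S_def field_simps)
  qed
  moreover have "G 9 (eta_wedge A)"
  proof (rule eta_wedge_in_G9)
    show "bilinear_form A" unfolding A_def by (rule bilinear_formI) (simp_all add: B_simps field_simps)
    show "A x xi = 0" "A x y = - A y x" for x y by (simp_all add: A_def B_xi xi_B field_simps)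
    show "A (phi x) (phi y) = A x y" for x y using K[of x y] K[of y x] by (simp add: A_def field_simps)
  qed
  ultimately have "in_sum ({5, 8} \<union> {9}) (eta_wedge B)"
    by (rule in_class_add[OF _ in_class_singleton]) (simp_all add: eta_wedge_def S_def A_def field_simps)
  then show ?thesis by (simp only: Un_insert_left Un_empty_left)
qed

definition horizontal_part :: "'m tens3 \<Rightarrow> 'm tens3" where
  "horizontal_part F x y z = F x (phi y) (phi z) - eta x * F xi (phi y) (phi z)"

definition G11_part :: "'m tens3 \<Rightarrow> 'm tens3" where
  "G11_part F x y z = eta x * F xi (phi y) (phi z)"

lemma Fspace_decomposition:
  assumes "Fspace phi xi eta F"
  shows "F x y z = horizontal_part F x y z + eta_wedge (\<lambda>x y. F x y xi) x y z + G11_part F x y z"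
  using FspaceD(3)[OF assms, of x y z] by (simp add: horizontal_part_def eta_wedge_def G11_part_def)

lemma horizontal_part_horizontal:
  assumes F: "Fspace phi xi eta F"
  shows "horizontal (horizontal_part F)"
  unfolding horizontal_def
proof (intro conjI allI)
  note F_simps = trilinear_simps[OF FspaceD(1)[OF F]]
  show "trilinear (horizontal_part F)"
    by (rule trilinearI) (simp_all add: horizontal_part_def F_simps algebra_simps)
  fix x y z
  show "horizontal_part F xi y z = 0" "horizontal_part F x xi z = 0" "horizontal_part F x y xi = 0"
    by (simp_all add: horizontal_part_def F_simps)
  show "horizontal_part F x y z = - horizontal_part F x z y"
    using FspaceD(2)[OF F, of x "phi y" "phi z"] FspaceD(2)[OF F, of xi "phi y" "phi z"]
    by (simp add: horizontal_part_def)
  show "horizontal_part F x (phi y) (phi z) = horizontal_part F x y z"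
    using Fspace_phi_phi[OF F, of x "phi y" "phi z"] Fspace_phi_phi[OF F, of xi "phi y" "phi z"]
    by (simp add: horizontal_part_def del: phi_phi)
qed

lemma G11_part_in_G11:
  assumes F: "Fspace phi xi eta F"
  shows "G 11 (G11_part F)"
  unfolding Gclass_iff
proof (intro conjI allI)
  note F_simps = trilinear_simps[OF FspaceD(1)[OF F]]
  have phi2: "F xi (phi (phi y)) (phi (phi z)) = F xi (phi y) (phi z)" for y z
    using Fspace_phi_phi[OF F, of xi "phi y" "phi z"] by simp
  show "Fspace phi xi eta (G11_part F)" unfolding Fspace_def
  proof (intro conjI allI)
    show "trilinear (G11_part F)" by (rule trilinearI) (simp_all add: G11_part_def F_simps algebra_simps)
    fix x y z
    show "G11_part F x y z = - G11_part F x z y"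
      using FspaceD(2)[OF F, of xi "phi y" "phi z"] by (simp add: G11_part_def)
    show "G11_part F x y z = G11_part F x (phi y) (phi z) - eta y * G11_part F x z xi
        + eta z * G11_part F x y xi"
      using phi2[of y z] by (simp add: G11_part_def F_simps del: phi_phi)
  qed
  fix x y z
  show "G11_part F x y z = eta x * G11_part F xi (phi y) (phi z)"
    using phi2[of y z] by (simp add: G11_part_def del: phi_phi)
qed

theorem in_class_iff_killing_tensor:
  assumes F: "Fspace phi xi eta F"
  shows "in_sum {1, 2, 3, 4, 5, 8, 9, 11} F \<longleftrightarrow> killing_tensor F"
proof
  show "in_sum {1, 2, 3, 4, 5, 8, 9, 11} F \<Longrightarrow> killing_tensor F" by (rule killing_tensor_if_in_class)
next
  assume K: "killing_tensor F"
  have "bilinear_form (\<lambda>x y. F x y xi)" by (rule trilinear_bilinear_form_12[OF FspaceD(1)[OF F]])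
  then have E: "in_sum {5, 8, 9} (eta_wedge (\<lambda>x y. F x y xi))"
    using eta_wedge_in_G589[of "\<lambda>x y. F x y xi"] Fspace_xi_xi[OF F] killing_tensorD[OF F K] by blast
  have V: "in_sum {1, 2, 3, 4} (horizontal_part F)"
    by (rule horizontal_in_G1234[OF horizontal_part_horizontal[OF F]])
  have VE: "in_sum ({1, 2, 3, 4} \<union> {5, 8, 9})
      (\<lambda>x y z. horizontal_part F x y z + eta_wedge (\<lambda>x y. F x y xi) x y z)"
    by (rule in_class_add[OF V E]) simp_all
  have "in_sum ({1, 2, 3, 4} \<union> {5, 8, 9} \<union> {11}) F"
    by (rule in_class_add[OF VE in_class_singleton[OF G11_part_in_G11[OF F]]])
      (simp_all add: Fspace_decomposition[OF F, symmetric])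
  then show "in_sum {1, 2, 3, 4, 5, 8, 9, 11} F" by (simp only: Un_insert_left Un_empty_left)
qed

end

lemma smooth_on_differentiable_at:
  assumes "open U" "p \<in> U" "smooth_on U f"
  shows "f differentiable (at p)"
proof -
  have "Ck_on (Suc 0) U f" using assms(3) unfolding smooth_on_def by blast
  then show ?thesis using assms(1,2) differentiable_on_eq_differentiable_at by auto
qed

lemma differentiable_at_vec:
  fixes Y :: "real^'n::finite \<Rightarrow> real^'k::finite"
  assumes "\<And>i. (\<lambda>q. Y q $ i) differentiable (at p)"
  shows "Y differentiable (at p)"
proof -
  have "(\<lambda>q. Y q \<bullet> b) differentiable (at p)" if "b \<in> Basis" for b :: "real^'k"
  proof -
    obtain k where "b = axis k 1" using \<open>b \<in> Basis\<close> unfolding Basis_vec_def by auto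
    then show ?thesis using assms[of k] by (simp add: cart_eq_inner_axis[symmetric])
  qed
  then show ?thesis using differentiable_componentwise_within[of Y p UNIV] by simp
qed

lemma has_derivative_vec_nth:
  "(Y has_derivative Y') F \<Longrightarrow> ((\<lambda>q. Y q $ i) has_derivative (\<lambda>x. Y' x $ i)) F"
  by (rule bounded_linear.has_derivative[OF bounded_linear_vec_nth])

lemma dd_has_derivative: "f differentiable (at p) \<Longrightarrow> (f has_derivative dd f p) (at p)"
  unfolding dd_def by (rule frechet_derivative_works[THEN iffD1])

lemma dd_eqI: "(f has_derivative D) (at p) \<Longrightarrow> dd f p = D"
  unfolding dd_def using frechet_derivative_at by metis

lemma dd_eqI_on_open:
  assumes "open U" "p \<in> U" "\<And>q. q \<in> U \<Longrightarrow> f q = f' q" "(f has_derivative D) (at p)"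
  shows "dd f' p = D"
  using has_derivative_transform_within_open[OF assms(4,1,2,3)] by (rule dd_eqI)

lemma dd_const: "dd (\<lambda>q. c) p = (\<lambda>x. 0)"
  by (rule dd_eqI) (rule has_derivative_const)

lemma linear_dd: "f differentiable (at p) \<Longrightarrow> linear (dd f p)"
  using dd_has_derivative has_derivative_linear by blast

lemma linear_dd_parameter:
  fixes f :: "real^'n::finite \<Rightarrow> 'a::real_vector \<Rightarrow> 'b::real_normed_vector"
  assumes U: "open U" "p \<in> U" and lin: "\<And>q. q \<in> U \<Longrightarrow> linear (f q)"
    and df: "\<And>a. (\<lambda>q. f q a) differentiable (at p)"
  shows "linear (\<lambda>a. dd (\<lambda>q. f q a) p x)"
proof (rule linearI)
  fix a b :: 'a and c :: real
  have "dd (\<lambda>q. f q (a + b)) p = (\<lambda>x. dd (\<lambda>q. f q a) p x + dd (\<lambda>q. f q b) p x)"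
    using lin by (intro dd_eqI_on_open[OF U, of "\<lambda>q. f q a + f q b"] has_derivative_add
        dd_has_derivative df) (simp add: linear_add)
  then show "dd (\<lambda>q. f q (a + b)) p x = dd (\<lambda>q. f q a) p x + dd (\<lambda>q. f q b) p x" by simp
  have "dd (\<lambda>q. f q (c *\<^sub>R a)) p = (\<lambda>x. c *\<^sub>R dd (\<lambda>q. f q a) p x)"
    using lin by (intro dd_eqI_on_open[OF U, of "\<lambda>q. c *\<^sub>R f q a"] has_derivative_scaleR_right
        dd_has_derivative df) (simp add: linear_scale)
  then show "dd (\<lambda>q. f q (c *\<^sub>R a)) p x = c *\<^sub>R dd (\<lambda>q. f q a) p x" by simp
qed

lemma has_derivative_linear_field:
  fixes P :: "real^'n::finite \<Rightarrow> real^'n \<Rightarrow> real^'k::finite"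
  assumes U: "open U" "p \<in> U" and lin: "\<And>q. q \<in> U \<Longrightarrow> linear (P q)"
    and dP: "\<And>a. (\<lambda>q. P q a) differentiable (at p)" and dY: "(Y has_derivative Y') (at p)"
  shows "((\<lambda>q. P q (Y q)) has_derivative (\<lambda>x. dd (\<lambda>q. P q (Y p)) p x + P p (Y' x))) (at p)"
proof -
  let ?S = "\<lambda>q. \<Sum>i\<in>UNIV. (Y q $ i) *\<^sub>R P q (axis i 1)"
  let ?S' = "\<lambda>x. \<Sum>i\<in>UNIV. (Y p $ i) *\<^sub>R dd (\<lambda>q. P q (axis i 1)) p x + (Y' x $ i) *\<^sub>R P p (axis i 1)"
  have scale_deriv: "((\<lambda>q. (Y q $ i) *\<^sub>R P q (axis i 1)) has_derivative
      (\<lambda>x. (Y p $ i) *\<^sub>R dd (\<lambda>q. P q (axis i 1)) p x + (Y' x $ i) *\<^sub>R P p (axis i 1))) (at p)" for i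
    by (rule has_derivative_scaleR[OF has_derivative_vec_nth[OF dY] dd_has_derivative[OF dP]])
  have D: "(?S has_derivative ?S') (at p)" by (intro has_derivative_sum scale_deriv)
  have S_eq: "?S q = P q (Y q)" if "q \<in> U" for q
    using linear_axis_expansion[OF lin[OF that], of "Y q"] by simp
  have "((\<lambda>q. P q (Y q)) has_derivative ?S') (at p)"
    by (rule has_derivative_transform_within_open[OF D U S_eq])
  moreover have "?S' x = dd (\<lambda>q. P q (Y p)) p x + P p (Y' x)" for x
    using linear_axis_expansion[OF linear_dd_parameter[OF U lin dP], of "Y p"]
      linear_axis_expansion[OF lin[OF U(2)], of "Y' x"]
    by (simp add: sum.distrib)
  ultimately show ?thesis by simp
qed

lemma has_derivative_bilinear_field:
  fixes G :: "real^'n::finite \<Rightarrow> real^'n \<Rightarrow> real^'n \<Rightarrow> real"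
  assumes U: "open U" "p \<in> U"
    and lin1: "\<And>q y. q \<in> U \<Longrightarrow> linear (\<lambda>x. G q x y)" and lin2: "\<And>q x. q \<in> U \<Longrightarrow> linear (G q x)"
    and dG: "\<And>a b. (\<lambda>q. G q a b) differentiable (at p)"
    and dY: "(Y has_derivative Y') (at p)" and dZ: "(Z has_derivative Z') (at p)"
  shows "((\<lambda>q. G q (Y q) (Z q)) has_derivative
     (\<lambda>x. dd (\<lambda>q. G q (Y p) (Z p)) p x + G p (Y' x) (Z p) + G p (Y p) (Z' x))) (at p)"
proof -
  let ?e = "\<lambda>i. axis i 1 :: real^'n"
  let ?S = "\<lambda>q. \<Sum>i\<in>UNIV. \<Sum>j\<in>UNIV. (Y q $ i * Z q $ j) * G q (?e i) (?e j)"
  let ?S' = "\<lambda>x. \<Sum>i\<in>UNIV. \<Sum>j\<in>UNIV. (Y p $ i * Z p $ j) * dd (\<lambda>q. G q (?e i) (?e j)) p x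
      + (Y p $ i * Z' x $ j + Y' x $ i * Z p $ j) * G p (?e i) (?e j)"
  have prod_deriv: "((\<lambda>q. (Y q $ i * Z q $ j) * G q (?e i) (?e j)) has_derivative
      (\<lambda>x. (Y p $ i * Z p $ j) * dd (\<lambda>q. G q (?e i) (?e j)) p x
        + (Y p $ i * Z' x $ j + Y' x $ i * Z p $ j) * G p (?e i) (?e j))) (at p)" for i j
    by (rule has_derivative_mult[OF has_derivative_mult[OF has_derivative_vec_nth[OF dY]
          has_derivative_vec_nth[OF dZ]] dd_has_derivative[OF dG]])
  have D: "(?S has_derivative ?S') (at p)" by (intro has_derivative_sum prod_deriv)
  have S_eq: "?S q = G q (Y q) (Z q)" if "q \<in> U" for q
    using bilinear_axis_expansion[of "G q" "Y q" "Z q", OF lin1[OF that] lin2[OF that]] by simp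
  have "((\<lambda>q. G q (Y q) (Z q)) has_derivative ?S') (at p)"
    by (rule has_derivative_transform_within_open[OF D U S_eq])
  moreover have "?S' x = dd (\<lambda>q. G q (Y p) (Z p)) p x + G p (Y' x) (Z p) + G p (Y p) (Z' x)" for x
  proof -
    have "linear (\<lambda>a. dd (\<lambda>q. G q a b) p x)" for b
      by (rule linear_dd_parameter[OF U]) (simp_all add: lin1 dG)
    moreover have "linear (\<lambda>b. dd (\<lambda>q. G q a b) p x)" for a
      by (rule linear_dd_parameter[OF U]) (simp_all add: lin2 dG)
    ultimately have "dd (\<lambda>q. G q (Y p) (Z p)) p x
        = (\<Sum>i\<in>UNIV. \<Sum>j\<in>UNIV. (Y p $ i * Z p $ j) * dd (\<lambda>q. G q (?e i) (?e j)) p x)"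
      by (rule bilinear_axis_expansion)
    moreover have "G p (Y' x) (Z p) = (\<Sum>i\<in>UNIV. \<Sum>j\<in>UNIV. (Y' x $ i * Z p $ j) * G p (?e i) (?e j))"
      "G p (Y p) (Z' x) = (\<Sum>i\<in>UNIV. \<Sum>j\<in>UNIV. (Y p $ i * Z' x $ j) * G p (?e i) (?e j))"
      using lin1[OF U(2)] lin2[OF U(2)] by (rule bilinear_axis_expansion)+
    ultimately show ?thesis by (simp only: sum.distrib distrib_right add_ac)
  qed
  ultimately show ?thesis by simp
qed

section \<open>The Levi-Civita connection in a chart\<close>

locale apcm_chart =
  fixes n :: nat and U :: "(real^'m::finite) set"
    and g :: "real^'m \<Rightarrow> real^'m \<Rightarrow> real^'m \<Rightarrow> real"
    and phi :: "real^'m \<Rightarrow> real^'m \<Rightarrow> real^'m"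
    and xi :: "real^'m \<Rightarrow> real^'m"
    and eta :: "real^'m \<Rightarrow> real^'m \<Rightarrow> real"
    and p :: "real^'m"
  assumes n_ge_1: "n \<ge> 1" and card_dim: "CARD('m) = 2 * n + 1" and open_U: "open U"
    and smooth_g: "\<forall>x y. smooth_on U (\<lambda>p. g p x y)"
    and smooth_phi: "\<forall>x i. smooth_on U (\<lambda>p. phi p x $ i)"
    and smooth_xi: "\<forall>i. smooth_on U (\<lambda>p. xi p $ i)"
    and smooth_eta: "\<forall>x. smooth_on U (\<lambda>p. eta p x)"
    and apcm_U: "\<forall>p\<in>U. apcm_point (g p) (phi p) (xi p) (eta p)"
    and p_in_U: "p \<in> U"
begin

lemma apcm_space_at: "q \<in> U \<Longrightarrow> apcm_space n (g q) (phi q) (xi q) (eta q)"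
  unfolding apcm_space_def using apcm_U n_ge_1 card_dim by blast

sublocale A: apcm_space n "g p" "phi p" "xi p" "eta p"
  by (rule apcm_space_at[OF p_in_U])

abbreviation Dg :: "real^'m \<Rightarrow> real^'m \<Rightarrow> real^'m \<Rightarrow> real" where
  "Dg x a b \<equiv> dd (\<lambda>q. g q a b) p x"

abbreviation Dphi :: "real^'m \<Rightarrow> real^'m \<Rightarrow> real^'m" where
  "Dphi x a \<equiv> dd (\<lambda>q. phi q a) p x"

abbreviation Dxi :: "real^'m \<Rightarrow> real^'m" where
  "Dxi \<equiv> dd xi p"

abbreviation Gam :: "real^'m \<Rightarrow> real^'m \<Rightarrow> real^'m" where
  "Gam \<equiv> christoffel g p"

lemma differentiable_g: "(\<lambda>q. g q a b) differentiable (at p)"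
  using smooth_on_differentiable_at[OF open_U p_in_U] smooth_g by blast

lemma differentiable_phi: "(\<lambda>q. phi q a) differentiable (at p)"
  by (rule differentiable_at_vec) (use smooth_on_differentiable_at[OF open_U p_in_U] smooth_phi in blast)

lemma differentiable_xi: "xi differentiable (at p)"
  by (rule differentiable_at_vec) (use smooth_on_differentiable_at[OF open_U p_in_U] smooth_xi in blast)

lemma differentiable_eta: "(\<lambda>q. eta q a) differentiable (at p)"
  using smooth_on_differentiable_at[OF open_U p_in_U] smooth_eta by blast

lemma linear_g_at: "q \<in> U \<Longrightarrow> linear (\<lambda>x. g q x y)" "q \<in> U \<Longrightarrow> linear (g q x)"
  using apcm_space.linear_g_left[OF apcm_space_at] apcm_space.linear_g_right[OF apcm_space_at] by blast+

lemma linear_phi_at: "q \<in> U \<Longrightarrow> linear (phi q)"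
  using apcm_space.linear_phi[OF apcm_space_at] by blast

lemma dd_cong_on_U: "(\<And>q. q \<in> U \<Longrightarrow> f q = f' q) \<Longrightarrow> f differentiable (at p) \<Longrightarrow> dd f' p = dd f p"
  using dd_eqI_on_open[OF open_U p_in_U] dd_has_derivative by blast

lemma has_derivative_unique_on_U:
  assumes "\<And>q. q \<in> U \<Longrightarrow> f q = f' q" "(f has_derivative D1) (at p)" "(f' has_derivative D2) (at p)"
  shows "D1 = D2"
  using dd_eqI_on_open[OF open_U p_in_U assms(1,2)] dd_eqI[OF assms(3)] by simp

lemma has_derivative_zero_on_U:
  assumes "\<And>q. q \<in> U \<Longrightarrow> f q = c" "(f has_derivative D) (at p)"
  shows "D x = 0"
  using has_derivative_unique_on_U[OF assms(1,2) has_derivative_const] by simp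

lemma Dg_simps:
  "Dg (x1 + x2) a b = Dg x1 a b + Dg x2 a b" "Dg (c *\<^sub>R x) a b = c * Dg x a b"
  "Dg x (a1 + a2) b = Dg x a1 b + Dg x a2 b" "Dg x (c *\<^sub>R a) b = c * Dg x a b"
  "Dg x a (b1 + b2) = Dg x a b1 + Dg x a b2" "Dg x a (c *\<^sub>R b) = c * Dg x a b"
proof -
  have l1: "linear (\<lambda>x. Dg x a b)" for a b by (rule linear_dd[OF differentiable_g])
  have l2: "linear (\<lambda>a. Dg x a b)" for x b
    by (rule linear_dd_parameter[OF open_U p_in_U]) (simp_all add: linear_g_at differentiable_g)
  have l3: "linear (\<lambda>b. Dg x a b)" for x a
    by (rule linear_dd_parameter[OF open_U p_in_U]) (simp_all add: linear_g_at differentiable_g)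
  show "Dg (x1 + x2) a b = Dg x1 a b + Dg x2 a b" using linear_add[OF l1[of a b]] by simp
  show "Dg (c *\<^sub>R x) a b = c * Dg x a b" using linear_scale[OF l1[of a b]] by simp
  show "Dg x (a1 + a2) b = Dg x a1 b + Dg x a2 b" using linear_add[OF l2[where x=x and b=b]] by simp
  show "Dg x (c *\<^sub>R a) b = c * Dg x a b" using linear_scale[OF l2[where x=x and b=b]] by simp
  show "Dg x a (b1 + b2) = Dg x a b1 + Dg x a b2" using linear_add[OF l3[where x=x and a=a]] by simp
  show "Dg x a (c *\<^sub>R b) = c * Dg x a b" using linear_scale[OF l3[where x=x and a=a]] by simp
qed

lemma Dg_sym: "Dg x a b = Dg x b a"
proof -
  have "dd (\<lambda>q. g q a b) p = dd (\<lambda>q. g q b a) p"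
    by (rule dd_cong_on_U) (use apcm_space.g_sym[OF apcm_space_at] differentiable_g in auto)
  then show ?thesis by simp
qed

lemma Dphi_simps:
  "Dphi (x1 + x2) a = Dphi x1 a + Dphi x2 a" "Dphi (c *\<^sub>R x) a = c *\<^sub>R Dphi x a"
  "Dphi x (a1 + a2) = Dphi x a1 + Dphi x a2" "Dphi x (c *\<^sub>R a) = c *\<^sub>R Dphi x a"
proof -
  have l1: "linear (\<lambda>x. Dphi x a)" for a by (rule linear_dd[OF differentiable_phi])
  have l2: "linear (\<lambda>a. Dphi x a)" for x
    by (rule linear_dd_parameter[OF open_U p_in_U]) (simp_all add: linear_phi_at differentiable_phi)
  show "Dphi (x1 + x2) a = Dphi x1 a + Dphi x2 a" using linear_add[OF l1[of a]] by simp
  show "Dphi (c *\<^sub>R x) a = c *\<^sub>R Dphi x a" using linear_scale[OF l1[of a]] by simp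
  show "Dphi x (a1 + a2) = Dphi x a1 + Dphi x a2" using linear_add[OF l2[of x]] by simp
  show "Dphi x (c *\<^sub>R a) = c *\<^sub>R Dphi x a" using linear_scale[OF l2[of x]] by simp
qed

lemma christoffel_ex1: "\<exists>!w. \<forall>z. 2 * g p w z = Dg x y z + Dg y x z - Dg z x y"
proof -
  have "linear (\<lambda>z. (Dg x y z + Dg y x z - Dg z x y) / 2)"
    by (rule linearI) (simp_all add: Dg_simps algebra_simps add_divide_distrib diff_divide_distrib)
  then obtain w where w: "\<And>z. g p w z = (Dg x y z + Dg y x z - Dg z x y) / 2"
    using A.riesz_representation by blast
  show ?thesis
  proof (rule ex1I[of _ w])
    show "\<forall>z. 2 * g p w z = Dg x y z + Dg y x z - Dg z x y" by (simp add: w)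
    fix w' assume w': "\<forall>z. 2 * g p w' z = Dg x y z + Dg y x z - Dg z x y"
    have "g p (w' - w) z = 0" for z using w'[rule_format, of z] w[of z] by simp
    then show "w' = w" using A.g_nondegenerate[of "w' - w"] by simp
  qed
qed

lemma christoffel_koszul: "2 * g p (Gam x y) z = Dg x y z + Dg y x z - Dg z x y"
  using theI'[OF christoffel_ex1[where x = x and y = y]] unfolding christoffel_def by blast

lemma christoffel_eqI:
  "(\<And>z. 2 * g p w z = Dg x y z + Dg y x z - Dg z x y) \<Longrightarrow> Gam x y = w"
  unfolding christoffel_def by (rule the1_equality[OF christoffel_ex1[where x = x and y = y]]) blast

lemma christoffel_sym: "Gam x y = Gam y x"
proof (rule christoffel_eqI)
  fix z
  show "2 * g p (Gam y x) z = Dg x y z + Dg y x z - Dg z x y"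
    using Dg_sym[where x = z and a = x and b = y] by (simp add: christoffel_koszul)
qed

lemma christoffel_simps:
  "Gam (x1 + x2) y = Gam x1 y + Gam x2 y" "Gam (c *\<^sub>R x) y = c *\<^sub>R Gam x y"
  "Gam x (y1 + y2) = Gam x y1 + Gam x y2" "Gam x (c *\<^sub>R y) = c *\<^sub>R Gam x y"
proof -
  show add: "Gam (x1 + x2) y = Gam x1 y + Gam x2 y" for x1 x2 y
    by (rule christoffel_eqI) (simp add: christoffel_koszul Dg_simps algebra_simps)
  show scale: "Gam (c *\<^sub>R x) y = c *\<^sub>R Gam x y" for c x y
    by (rule christoffel_eqI) (simp add: christoffel_koszul Dg_simps algebra_simps)
  show "Gam x (y1 + y2) = Gam x y1 + Gam x y2" using add christoffel_sym by metis
  show "Gam x (c *\<^sub>R y) = c *\<^sub>R Gam x y" using scale christoffel_sym by metis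
qed

lemma linear_christoffel: "linear (Gam x)"
  by (rule linearI) (simp_all add: christoffel_simps)

lemma christoffel_metric: "Dg x a b = g p (Gam x a) b + g p a (Gam x b)"
proof -
  have "2 * g p (Gam x a) b + 2 * g p (Gam x b) a = 2 * Dg x a b"
    using Dg_sym[where x = x and a = b and b = a] by (simp add: christoffel_koszul)
  then show ?thesis using A.g_sym[of a "Gam x b"] by simp
qed

lemma D_g_phi_skew: "Dg x (phi p y) z + g p (Dphi x y) z + Dg x y (phi p z) + g p y (Dphi x z) = 0"
proof -
  have d1: "((\<lambda>q. g q (phi q y) z) has_derivative
      (\<lambda>x. Dg x (phi p y) z + g p (Dphi x y) z + g p (phi p y) 0)) (at p)"
    using has_derivative_bilinear_field[OF open_U p_in_U linear_g_at differentiable_g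
        dd_has_derivative[OF differentiable_phi] has_derivative_const] by simp
  have d2: "((\<lambda>q. g q y (phi q z)) has_derivative
      (\<lambda>x. Dg x y (phi p z) + g p 0 (phi p z) + g p y (Dphi x z))) (at p)"
    using has_derivative_bilinear_field[OF open_U p_in_U linear_g_at differentiable_g
        has_derivative_const dd_has_derivative[OF differentiable_phi]] by simp
  have "(\<lambda>x. Dg x (phi p y) z + g p (Dphi x y) z + g p (phi p y) 0
      + (Dg x y (phi p z) + g p 0 (phi p z) + g p y (Dphi x z))) x = 0"
    by (rule has_derivative_zero_on_U[OF _ has_derivative_add[OF d1 d2]])
      (simp add: apcm_space.g_phi_skew[OF apcm_space_at])
  then show ?thesis by simp
qed

lemma D_phi_xi: "Dphi x (xi p) + phi p (Dxi x) = 0"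
proof -
  have d: "((\<lambda>q. phi q (xi q)) has_derivative (\<lambda>x. Dphi x (xi p) + phi p (Dxi x))) (at p)"
    using has_derivative_linear_field[OF open_U p_in_U linear_phi_at differentiable_phi
        dd_has_derivative[OF differentiable_xi]] by simp
  show ?thesis
    by (rule has_derivative_zero_on_U[where c = 0, OF _ d]) (simp add: apcm_space.phi_xi[OF apcm_space_at])
qed

lemma D_g_xi_xi: "Dg x (xi p) (xi p) + 2 * g p (Dxi x) (xi p) = 0"
proof -
  have d: "((\<lambda>q. g q (xi q) (xi q)) has_derivative
      (\<lambda>x. Dg x (xi p) (xi p) + g p (Dxi x) (xi p) + g p (xi p) (Dxi x))) (at p)"
    using has_derivative_bilinear_field[OF open_U p_in_U linear_g_at differentiable_g
        dd_has_derivative[OF differentiable_xi] dd_has_derivative[OF differentiable_xi]] by simp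
  have "Dg x (xi p) (xi p) + g p (Dxi x) (xi p) + g p (xi p) (Dxi x) = 0"
    by (rule has_derivative_zero_on_U[where c = 1, OF _ d])
      (simp add: apcm_space.g_xi[OF apcm_space_at] apcm_space.eta_xi[OF apcm_space_at])
  then show ?thesis using A.g_sym[of "xi p" "Dxi x"] by simp
qed

lemma D_phi_phi:
  "Dphi x (phi p y) = - phi p (Dphi x y) - dd (\<lambda>q. eta q y) p x *\<^sub>R xi p - eta p y *\<^sub>R Dxi x"
proof -
  have d1: "((\<lambda>q. phi q (phi q y)) has_derivative (\<lambda>x. Dphi x (phi p y) + phi p (Dphi x y))) (at p)"
    using has_derivative_linear_field[OF open_U p_in_U linear_phi_at differentiable_phi
        dd_has_derivative[OF differentiable_phi]] by simp
  have d2: "((\<lambda>q. y - eta q y *\<^sub>R xi q) has_derivative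
      (\<lambda>x. 0 - (eta p y *\<^sub>R Dxi x + dd (\<lambda>q. eta q y) p x *\<^sub>R xi p))) (at p)"
    by (rule has_derivative_diff[OF has_derivative_const has_derivative_scaleR[OF
          dd_has_derivative[OF differentiable_eta] dd_has_derivative[OF differentiable_xi]]])
  have "(\<lambda>x. Dphi x (phi p y) + phi p (Dphi x y)) =
      (\<lambda>x. 0 - (eta p y *\<^sub>R Dxi x + dd (\<lambda>q. eta q y) p x *\<^sub>R xi p))"
    by (rule has_derivative_unique_on_U[OF _ d1 d2]) (simp add: apcm_space.phi_phi[OF apcm_space_at])
  then have "Dphi x (phi p y) + phi p (Dphi x y) = - (eta p y *\<^sub>R Dxi x + dd (\<lambda>q. eta q y) p x *\<^sub>R xi p)"
    by (simp add: fun_eq_iff)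
  then have Dphi_eq: "Dphi x (phi p y)
      = - (eta p y *\<^sub>R Dxi x + dd (\<lambda>q. eta q y) p x *\<^sub>R xi p) - phi p (Dphi x y)"
    by (rule eq_diff_eq[THEN iffD2])
  show ?thesis by (simp only: Dphi_eq) (simp add: algebra_simps)
qed

abbreviation F :: "'m tens3" where
  "F \<equiv> struct_tensor g phi p"

lemma struct_tensor_christoffel:
  "F x y z = g p (Dphi x y) z + g p (Gam x (phi p y)) z + g p (Gam x y) (phi p z)"
  unfolding struct_tensor_def nabla_phi_def lc_nabla_def
  using A.g_phi_skew[of "Gam x y" z] by (simp add: dd_const)

lemma struct_tensor_skew: "F x y z = - F x z y"
proof -
  have "Dg x (phi p y) z + g p (Dphi x y) z + Dg x y (phi p z) + g p y (Dphi x z) = 0"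
    by (rule D_g_phi_skew)
  then show ?thesis
    unfolding struct_tensor_christoffel christoffel_metric
    using A.g_sym[of y "Dphi x z"] A.g_sym[of "phi p y" "Gam x z"] A.g_sym[of y "Gam x (phi p z)"]
    by linarith
qed

lemma eta_nabla_xi: "eta p (lc_nabla g xi p x) = 0"
proof -
  have "Dg x (xi p) (xi p) = 2 * eta p (Gam x (xi p))"
    using christoffel_metric[where x = x and a = "xi p" and b = "xi p"] by simp
  then show ?thesis using D_g_xi_xi[of x] by (simp add: lc_nabla_def)
qed

lemma struct_tensor_xi: "F x y (xi p) = g p (phi p (lc_nabla g xi p x)) y"
proof -
  have "F x (xi p) y = g p (Dphi x (xi p)) y + g p (Gam x (xi p)) (phi p y)"
    by (simp add: struct_tensor_christoffel linear_0[OF linear_christoffel])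
  also have "Dphi x (xi p) = - phi p (Dxi x)" using D_phi_xi[of x] by (simp add: eq_neg_iff_add_eq_0)
  finally have "F x (xi p) y = - g p (phi p (lc_nabla g xi p x)) y"
    using A.g_phi_skew[of "Gam x (xi p)" y] by (simp add: lc_nabla_def)
  then show ?thesis using struct_tensor_skew[of x y "xi p"] by simp
qed

text \<open>The Lie derivative of g along xi is the symmetrised covariant derivative of xi, which the
  structure tensor expresses through phi.\<close>

lemma lie_g_struct_tensor: "lie_g g xi p x y = - (F x (phi p y) (xi p) + F y (phi p x) (xi p))"
proof -
  have "Dg (xi p) x y = g p (Gam x (xi p)) y + g p x (Gam y (xi p))"
    using christoffel_metric[where x = "xi p" and a = x and b = y] christoffel_sym[of "xi p" x] christoffel_sym[of "xi p" y]
    by simp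
  then have "lie_g g xi p x y = g p (lc_nabla g xi p x) y + g p (lc_nabla g xi p y) x"
    using A.g_sym[of x "Dxi y"] A.g_sym[of x "Gam y (xi p)"] by (simp add: lie_g_def lc_nabla_def)
  moreover have "F x (phi p y) (xi p) = - g p (lc_nabla g xi p x) y" for x y
    using eta_nabla_xi[of x] by (simp add: struct_tensor_xi)
  ultimately show ?thesis by simp
qed

lemma struct_tensor_phi_phi:
  "F x y z = F x (phi p y) (phi p z) - eta p y * F x z (xi p) + eta p z * F x y (xi p)"
proof -
  have "F x y (xi p) = g p (Dphi x y) (xi p) + g p (Gam x (phi p y)) (xi p)"
    by (simp add: struct_tensor_christoffel)
  then show ?thesis
    unfolding struct_tensor_christoffel[of x "phi p y"] struct_tensor_christoffel[of x y z]
      struct_tensor_xi[of x z]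
    by (simp add: D_phi_phi A.g_phi_skew christoffel_simps linear_diff[OF linear_christoffel]
        lc_nabla_def algebra_simps)
qed

lemma struct_tensor_Fspace: "Fspace (phi p) (xi p) (eta p) F"
  unfolding Fspace_def
proof (intro conjI allI)
  show "trilinear F"
    by (rule trilinearI) (simp_all add: struct_tensor_christoffel Dphi_simps christoffel_simps algebra_simps)
qed (rule struct_tensor_skew, rule struct_tensor_phi_phi)

end

theorem proposition2p2:
  fixes n :: nat and U :: "(real^'m) set"
    and g :: "real^'m \<Rightarrow> real^'m \<Rightarrow> real^'m \<Rightarrow> real"
    and phi :: "real^'m \<Rightarrow> real^'m \<Rightarrow> real^'m"
    and xi :: "real^'m \<Rightarrow> real^'m"
    and eta :: "real^'m \<Rightarrow> real^'m \<Rightarrow> real"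
  assumes "n \<ge> 1" and "CARD('m) = 2 * n + 1" and "open U"
    and "\<forall>x y. smooth_on U (\<lambda>p. g p x y)"
    and "\<forall>x i. smooth_on U (\<lambda>p. phi p x $ i)"
    and "\<forall>i. smooth_on U (\<lambda>p. xi p $ i)"
    and "\<forall>x. smooth_on U (\<lambda>p. eta p x)"
    and "\<forall>p\<in>U. apcm_point (g p) (phi p) (xi p) (eta p)"
  shows "killing_on U g xi \<longleftrightarrow>
    (\<forall>p\<in>U. in_class n (g p) (phi p) (xi p) (eta p) {1,2,3,4,5,8,9,11} (struct_tensor g phi p))"
proof -
  have "(\<forall>x y. lie_g g xi p x y = 0) \<longleftrightarrow>
      in_class n (g p) (phi p) (xi p) (eta p) {1,2,3,4,5,8,9,11} (struct_tensor g phi p)"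
    if "p \<in> U" for p
  proof -
    interpret apcm_chart n U g phi xi eta p
      by unfold_locales (use assms that in auto)
    have "(\<forall>x y. lie_g g xi p x y = 0) \<longleftrightarrow> A.killing_tensor F"
      unfolding A.killing_tensor_def lie_g_struct_tensor by (simp only: neg_equal_0_iff_equal)
    then show ?thesis using A.in_class_iff_killing_tensor[OF struct_tensor_Fspace] by simp
  qed
  then show ?thesis unfolding killing_on_def by blast
qed

end
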